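(* Assume that for every $y\in\mathcal Y$ the map $u\mapsto\ell(y,u)$ is convex, twice continuously differentiable and $\rho$-Lipschitz continuous ($\rho\in(0,\infty)$), that $u\mapsto s(y,u)$ is $\gamma$-Lipschitz continuous for every $y$, and that $(X_1,Y_1),\dots,(X_{n+1},Y_{n+1})$ are exchangeable and the predictor is invariant to permutations of its training data. Then for every $\alpha\in(0,1)$, $\mathbb P[Y_{n+1}\in\tilde C^{\mathrm{up},(1)}_{\lambda;\alpha}(X_{n+1})]\ge1-\alpha$, and (almost surely) $$\mathrm{THK}^{(1)}_{\lambda;\alpha}\le\mathrm{THK}^{(0)}_{\lambda;\alpha}.$$
   Context: Let $\mathcal X\subset\mathbb R^d$, $\mathcal Y\subset\mathbb R$, $D=\{(X_1,Y_1),\dots,(X_n,Y_n)\}$ i.i.d. with distribution $P$, $(X_{n+1},Y_{n+1})\sim P$ independent. $D^y=D\cup\{(X_{n+1},y)\}$. $\mathcal H$ is an RKHS with kernel $\kappa_{\mathcal H}$, $K=(\kappa_{\mathcal H}(X_i,X_j))_{1\le i,j\le n+1}$. For a loss $\ell$ and $\lambda>0$, $\hat f_{\lambda;D^y}$ minimizes $\frac1{n+1}\sum_{(x,y')\in D^y}\ell(y',f(x))+\lambda\|f\|_{\mathcal H}^2$. Scores: $S_{\lambda;D^y}(X_i,Y_i)=s(Y_i,\hat f_{\lambda;D^y}(X_i))$ ($i\le n$), $S_{\lambda;D^y}(X_{n+1},y)=s(y,\hat f_{\lambda;D^y}(X_{n+1}))$; full conformal p-value $\hat\pi_{\lambda;D}(X_{n+1},y)=\frac{1+\sum_{i\le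 n}\mathbb 1\{S_{\lambda;D^y}(X_i,Y_i)\ge S_{\lambda;D^y}(X_{n+1},y)\}}{n+1}$, region $\hat C_{\lambda;\alpha}(X_{n+1})=\{y:\hat\pi_{\lambda;D}>\alpha\}$. Fix $z\in\mathcal Y$; approximate scores $\tilde S_{\lambda;D^y}(X_i,Y_i)=s(Y_i,\hat f_{\lambda;D^z}(X_i))$, $\tilde S_{\lambda;D^y}(X_{n+1},y)=s(y,\hat f_{\lambda;D^z}(X_{n+1}))$. Let $\tau^{(0)}_{\lambda;i}=\sqrt{K_{i,i}K_{n+1,n+1}}\frac{\gamma\rho}{\lambda(n+1)}$, $\rho^{(1)}_\lambda(y)=\frac12|\partial_2\ell(y,\hat f_{\lambda;D^z}(X_{n+1}))-\partial_2\ell(z,\hat f_{\lambda;D^z}(X_{n+1}))|$ and $\tau^{(1)}_{\lambda;i}(y)=\sqrt{K_{i,i}K_{n+1,n+1}}\frac{\gamma\rho^{(1)}_\lambda(y)}{\lambda(n+1)}$. For $k\in\{0,1\}$ (with $\tau^{(0)}$ independent of $y$), $\tilde\pi^{\mathrm{up},(k)}_{\lambda;D}(X_{n+1},y)=\frac{1+\sum_{i=1}^n\mathbb 1\{\tilde S_{\lambda;D^y}(X_i,Y_i)+\tau^{(k)}_{\lambda;i}(y)\ge\tilde S_{\lambda;D^y}(X_{n+1},y)-\tau^{(k)}_{\lambda;n+1}(y)\}}{n+1}$, $\tilde C^{\mathrm{up},(k)}_{\lambda;\alpha}(X_{n+1})=\{y:\tilde\pi^{\mathrm{up},(k)}_{\lambda;D}(X_{n+1},y)>\alpha\}$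 and $\mathrm{THK}^{(k)}_{\lambda;\alpha}=\mathcal L(\tilde C^{\mathrm{up},(k)}_{\lambda;\alpha}(X_{n+1})\setminus\hat C_{\lambda;\alpha}(X_{n+1}))$ ($\mathcal L$ Lebesgue measure). *)

theory Defs
  imports "HOL-Analysis.Analysis" "HOL-Probability.Probability"
begin

(* RKHS rendered through a feature map Phi :: 'x => 'h into a real Hilbert space 'h;
   f_w(x) = w \<bullet> Phi x, kernel kappa(x,x') = Phi x \<bullet> Phi x'.
   Data: indices 1..n are the training points, index n+1 is the test point. *)

definition kern :: "('x \<Rightarrow> 'h::real_inner) \<Rightarrow> 'x \<Rightarrow> 'x \<Rightarrow> real" where
  "kern Phi x x' = Phi x \<bullet> Phi x'"

definition reg_risk ::
  "(real \<Rightarrow> real \<Rightarrow> real) \<Rightarrow> ('x \<Rightarrow> 'h::real_inner) \<Rightarrow> real \<Rightarrow> nat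
    \<Rightarrow> (nat \<Rightarrow> 'x) \<Rightarrow> (nat \<Rightarrow> real) \<Rightarrow> 'h \<Rightarrow> real" where
  "reg_risk l Phi lam n xs ys w =
     (\<Sum>i=1..n+1. l (ys i) (w \<bullet> Phi (xs i))) / real (n+1) + lam * (norm w)\<^sup>2"

definition fhat ::
  "(real \<Rightarrow> real \<Rightarrow> real) \<Rightarrow> ('x \<Rightarrow> 'h::real_inner) \<Rightarrow> real \<Rightarrow> nat
    \<Rightarrow> (nat \<Rightarrow> 'x) \<Rightarrow> (nat \<Rightarrow> real) \<Rightarrow> real \<Rightarrow> 'h" where
  "fhat l Phi lam n xs ys y =
     (SOME w. \<forall>v. reg_risk l Phi lam n xs (ys(n+1 := y)) w \<le> reg_risk l Phi lam n xs (ys(n+1 := y)) v)"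

definition pval_full ::
  "(real \<Rightarrow> real \<Rightarrow> real) \<Rightarrow> (real \<Rightarrow> real \<Rightarrow> real) \<Rightarrow> ('x \<Rightarrow> 'h::real_inner) \<Rightarrow> real \<Rightarrow> nat
    \<Rightarrow> (nat \<Rightarrow> 'x) \<Rightarrow> (nat \<Rightarrow> real) \<Rightarrow> real \<Rightarrow> real" where
  "pval_full l s Phi lam n xs ys y =
     (let w = fhat l Phi lam n xs ys y in
      (1 + real (card {i\<in>{1..n}. s (ys i) (w \<bullet> Phi (xs i)) \<ge> s y (w \<bullet> Phi (xs (n+1)))})) / real (n+1))"

definition C_full ::
  "real set \<Rightarrow> (real \<Rightarrow> real \<Rightarrow> real) \<Rightarrow> (real \<Rightarrow> real \<Rightarrow> real) \<Rightarrow> ('x \<Rightarrow> 'h::real_inner) \<Rightarrow> real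
    \<Rightarrow> real \<Rightarrow> nat \<Rightarrow> (nat \<Rightarrow> 'x) \<Rightarrow> (nat \<Rightarrow> real) \<Rightarrow> real set" where
  "C_full Y l s Phi lam alpha n xs ys = {y\<in>Y. pval_full l s Phi lam n xs ys y > alpha}"

(* tau^{(0)}_{lambda;i} (constant in y) *)
definition tau0 ::
  "('x \<Rightarrow> 'h::real_inner) \<Rightarrow> real \<Rightarrow> real \<Rightarrow> real \<Rightarrow> nat \<Rightarrow> (nat \<Rightarrow> 'x) \<Rightarrow> nat \<Rightarrow> real \<Rightarrow> real" where
  "tau0 Phi gamma rho lam n xs i y =
     sqrt (kern Phi (xs i) (xs i) * kern Phi (xs (n+1)) (xs (n+1))) * (gamma * rho) / (lam * real (n+1))"

definition rho1 ::
  "(real \<Rightarrow> real \<Rightarrow> real) \<Rightarrow> ('x \<Rightarrow> 'h::real_inner) \<Rightarrow> real \<Rightarrow> nat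
    \<Rightarrow> (nat \<Rightarrow> 'x) \<Rightarrow> (nat \<Rightarrow> real) \<Rightarrow> real \<Rightarrow> real \<Rightarrow> real" where
  "rho1 l Phi lam n xs ys z y =
     (let u = fhat l Phi lam n xs ys z \<bullet> Phi (xs (n+1)) in
      \<bar>deriv (l y) u - deriv (l z) u\<bar> / 2)"

definition tau1 ::
  "(real \<Rightarrow> real \<Rightarrow> real) \<Rightarrow> ('x \<Rightarrow> 'h::real_inner) \<Rightarrow> real \<Rightarrow> real \<Rightarrow> nat
    \<Rightarrow> (nat \<Rightarrow> 'x) \<Rightarrow> (nat \<Rightarrow> real) \<Rightarrow> real \<Rightarrow> nat \<Rightarrow> real \<Rightarrow> real" where
  "tau1 l Phi gamma lam n xs ys z i y =
     sqrt (kern Phi (xs i) (xs i) * kern Phi (xs (n+1)) (xs (n+1)))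
       * (gamma * rho1 l Phi lam n xs ys z y) / (lam * real (n+1))"

definition pval_up ::
  "(real \<Rightarrow> real \<Rightarrow> real) \<Rightarrow> (real \<Rightarrow> real \<Rightarrow> real) \<Rightarrow> ('x \<Rightarrow> 'h::real_inner) \<Rightarrow> real \<Rightarrow> nat
    \<Rightarrow> (nat \<Rightarrow> 'x) \<Rightarrow> (nat \<Rightarrow> real) \<Rightarrow> real \<Rightarrow> (nat \<Rightarrow> real \<Rightarrow> real) \<Rightarrow> real \<Rightarrow> real" where
  "pval_up l s Phi lam n xs ys z tau y =
     (let w = fhat l Phi lam n xs ys z in
      (1 + real (card {i\<in>{1..n}.
          s (ys i) (w \<bullet> Phi (xs i)) + tau i y \<ge> s y (w \<bullet> Phi (xs (n+1))) - tau (n+1) y}))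
      / real (n+1))"

definition C_up ::
  "real set \<Rightarrow> (real \<Rightarrow> real \<Rightarrow> real) \<Rightarrow> (real \<Rightarrow> real \<Rightarrow> real) \<Rightarrow> ('x \<Rightarrow> 'h::real_inner) \<Rightarrow> real
    \<Rightarrow> real \<Rightarrow> nat \<Rightarrow> (nat \<Rightarrow> 'x) \<Rightarrow> (nat \<Rightarrow> real) \<Rightarrow> real \<Rightarrow> (nat \<Rightarrow> real \<Rightarrow> real) \<Rightarrow> real set" where
  "C_up Y l s Phi lam alpha n xs ys z tau = {y\<in>Y. pval_up l s Phi lam n xs ys z tau y > alpha}"

definition leb_outer :: "real set \<Rightarrow> ennreal" where
  "leb_outer A = (INF B \<in> {B \<in> sets lebesgue. A \<subseteq> B}. emeasure lebesgue B)"

definition exchangeable :: "'w measure \<Rightarrow> nat \<Rightarrow> (nat \<Rightarrow> 'w \<Rightarrow> 'z::topological_space) \<Rightarrow> bool" where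
  "exchangeable M n Z \<longleftrightarrow>
     (\<forall>\<sigma>. \<sigma> permutes {1..n+1} \<longrightarrow>
        distr M (PiM {1..n+1} (\<lambda>_. borel)) (\<lambda>\<omega>. \<lambda>i\<in>{1..n+1}. Z (\<sigma> i) \<omega>)
      = distr M (PiM {1..n+1} (\<lambda>_. borel)) (\<lambda>\<omega>. \<lambda>i\<in>{1..n+1}. Z i \<omega>))"

end

(*
  The regularized risk is strongly midpoint convex, so it has a minimizer on the Hilbert space,
  characterized by the first-order condition. Subtracting the first-order conditions for the test
  labels y and z in the direction of the difference of the two minimizers, monotonicity of the
  derivative of each convex loss removes every term but the one of the test point:
  2 lambda (n+1) |f_y - f_z| <= |l'(y,u) - l'(z,u)| |Phi(X_(n+1))| with u = f_z(X_(n+1)).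
  With gamma-Lipschitz scores, every score thus moves by at most tau1 when f_y is replaced by f_z,
  so the full conformal set lies in the upper approximate set for tau1, which inherits the
  1 - alpha coverage that exchangeability gives the full conformal set. Since |l'| <= rho, also
  tau1 <= tau0, so the two upper sets are nested and THK1 <= THK0 for every sample.

  The coverage event is measurable because the fitted values can be read off countably many
  near-minimizers with rational coefficients in the span of the features.
*)

theory Submission
  imports Defs
begin

section \<open>Minimizers of strongly convex functions\<close>

lemma norm_midpoint_squared:
  fixes a b :: "'a::real_inner"
  shows "(norm (midpoint a b))\<^sup>2 = ((norm a)\<^sup>2 + (norm b)\<^sup>2) / 2 - (norm (a - b))\<^sup>2 / 4"
  by (simp add: midpoint_def power2_norm_eq_inner inner_add_left inner_add_right
      inner_diff_left inner_diff_right inner_commute field_simps)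

lemma strongly_midconvex_near_minimizers_close:
  fixes G :: "'a::real_normed_vector \<Rightarrow> real"
  assumes midconvex: "\<And>a b. G (midpoint a b) + c * (norm (a - b))\<^sup>2 \<le> (G a + G b) / 2"
    and lower: "\<And>v. m \<le> G v" and c: "c > 0" and e: "e \<ge> 0"
    and near: "G a < m + c * e\<^sup>2" "G b < m + c * e\<^sup>2"
  shows "norm (a - b) < e"
proof -
  have "c * (norm (a - b))\<^sup>2 < c * e\<^sup>2"
    using midconvex[of a b] lower[of "midpoint a b"] near by argo
  then have "(norm (a - b))\<^sup>2 < e\<^sup>2" using c by simp
  then show ?thesis using e by (rule power_less_imp_less_base)
qed

definition minimizes :: "('a \<Rightarrow> real) \<Rightarrow> 'a \<Rightarrow> bool" where
  "minimizes F w \<longleftrightarrow> (\<forall>v. F w \<le> F v)"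

lemma strongly_midconvex_has_minimizer:
  fixes G :: "'a::{real_normed_vector,complete_space} \<Rightarrow> real"
  assumes c: "c > 0" and cont: "continuous_on UNIV G" and bdd: "bdd_below (range G)"
    and midconvex: "\<And>a b. G (midpoint a b) + c * (norm (a - b))\<^sup>2 \<le> (G a + G b) / 2"
  shows "\<exists>w. minimizes G w"
proof -
  define m where "m = Inf (range G)"
  have m_le: "m \<le> G v" for v
    unfolding m_def using bdd by (simp add: cInf_lower)
  define eps where "eps k = inverse (real (Suc k))" for k
  have eps_antimono: "eps k \<le> eps j" if "j \<le> k" for j k
    using that by (simp add: eps_def le_imp_inverse_le)
  have "\<exists>w. G w < m + c * (eps k)\<^sup>2" for k
  proof -
    have "Inf (range G) < m + c * (eps k)\<^sup>2" using c by (simp add: m_def eps_def)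
    then show ?thesis using bdd by (subst (asm) cInf_less_iff) auto
  qed
  then obtain ws where ws: "\<And>k. G (ws k) < m + c * (eps k)\<^sup>2" by metis
  have "Cauchy ws"
  proof (rule metric_CauchyI)
    fix e :: real assume "e > 0"
    then obtain N where N: "eps N < e" unfolding eps_def using reals_Archimedean by blast
    have "dist (ws j) (ws k) < e" if "N \<le> j" "N \<le> k" for j k
    proof -
      have "c * (eps i)\<^sup>2 \<le> c * (eps N)\<^sup>2" if "N \<le> i" for i
        using c that by (auto intro!: mult_left_mono power_mono eps_antimono simp: eps_def)
      then have near: "G (ws i) < m + c * (eps N)\<^sup>2" if "N \<le> i" for i
        using ws[of i] that by fastforce
      have "norm (ws j - ws k) < eps N"
        by (rule strongly_midconvex_near_minimizers_close[OF midconvex m_le c _ near near])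
          (use that in \<open>simp_all add: eps_def\<close>)
      then show ?thesis using N by (simp add: dist_norm)
    qed
    then show "\<exists>M. \<forall>j\<ge>M. \<forall>k\<ge>M. dist (ws j) (ws k) < e" by blast
  qed
  then obtain w where "ws \<longlonglongrightarrow> w" using Cauchy_convergent_iff convergent_def by blast
  then have "(\<lambda>k. G (ws k)) \<longlonglongrightarrow> G w"
    by (rule continuous_on_tendsto_compose[OF cont]) auto
  moreover have "(\<lambda>k. m + c * (eps k)\<^sup>2) \<longlonglongrightarrow> m"
    unfolding eps_def using tendsto_add[OF tendsto_const tendsto_mult[OF tendsto_const
        tendsto_power[OF LIMSEQ_inverse_real_of_nat, of 2]], of m c] by simp
  ultimately have "G w \<le> m"
    by (rule LIMSEQ_le) (use ws in \<open>auto intro: less_imp_le\<close>)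
  then show ?thesis using m_le order_trans unfolding minimizes_def by blast
qed

lemma lipschitz_on_deriv_bound:
  fixes f :: "real \<Rightarrow> real"
  assumes lip: "L-lipschitz_on UNIV f" and der: "(f has_real_derivative f') (at a)"
  shows "\<bar>f'\<bar> \<le> L"
proof -
  have "((\<lambda>h. \<bar>(f (a + h) - f a) / h\<bar>) \<longlongrightarrow> \<bar>f'\<bar>) (at 0)"
    using der unfolding DERIV_def by (rule tendsto_rabs)
  moreover have "\<bar>(f (a + h) - f a) / h\<bar> \<le> L" if "h \<noteq> 0" for h
  proof -
    have "\<bar>f (a + h) - f a\<bar> \<le> L * \<bar>h\<bar>"
      using lipschitz_onD[OF lip, of "a + h" a] by (simp add: dist_real_def)
    then show ?thesis using that by (simp add: divide_le_eq)
  qed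
  then have "\<forall>\<^sub>F h in at 0. \<bar>(f (a + h) - f a) / h\<bar> \<le> L"
    by (auto simp: eventually_at intro!: exI[of _ 1])
  ultimately show ?thesis
    by (rule tendsto_upperbound) simp
qed

section \<open>Ranks of exchangeable scores\<close>

lemma card_filter_eq_sum:
  "finite I \<Longrightarrow> of_nat (card {i\<in>I. P i}) = (\<Sum>i\<in>I. if P i then 1 else (0::'a::semiring_1))"
  by (simp add: sum.If_cases Int_def)

lemma card_low_rank_le:
  fixes S :: "'i \<Rightarrow> real"
  assumes "finite I" and "0 \<le> a"
  shows "real (card {j\<in>I. real (card {i\<in>I. S j \<le> S i}) \<le> a}) \<le> a"
proof (cases "{j\<in>I. real (card {i\<in>I. S j \<le> S i}) \<le> a} = {}")
  case True
  then show ?thesis using assms(2) by (simp only: True card.empty of_nat_0)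
next
  case False
  define J where "J = {j\<in>I. real (card {i\<in>I. S j \<le> S i}) \<le> a}"
  have J: "finite J" "J \<noteq> {}" using assms(1) False by (simp_all add: J_def)
  then have "Min (S ` J) \<in> S ` J" by (intro Min_in) auto
  then obtain j0 where j0: "j0 \<in> J" "S j0 = Min (S ` J)" by (metis imageE)
  have "J \<subseteq> {i\<in>I. S j0 \<le> S i}" using j0 J by (auto simp: J_def)
  then have "card J \<le> card {i\<in>I. S j0 \<le> S i}" using assms(1) by (intro card_mono) auto
  moreover have "real (card {i\<in>I. S j0 \<le> S i}) \<le> a" using j0(1) by (simp add: J_def)
  ultimately show ?thesis unfolding J_def[symmetric] by linarith
qed

lemma card_filter_permutes:
  assumes "\<sigma> permutes I" "finite I"
  shows "card {i\<in>I. P (\<sigma> i)} = card {i\<in>I. P i}"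
proof -
  have "(\<Sum>i\<in>I. if P (\<sigma> i) then 1 else 0) = (\<Sum>i\<in>I. if P i then 1 else (0::nat))"
    using sum.permute[OF assms(1), of "\<lambda>k. if P k then 1 else 0"] unfolding comp_def by (rule sym)
  then show ?thesis using card_filter_eq_sum[OF assms(2), where 'a = nat] by simp
qed

lemma card_rank_permute:
  fixes n :: nat
  assumes \<sigma>: "\<sigma> permutes {1..n+1}" and j: "j \<in> {1..n+1}"
    and equivariant: "\<And>i. i \<in> {1..n+1} \<Longrightarrow> score (\<lambda>k\<in>{1..n+1}. p (\<sigma> k)) i = score p (\<sigma> i)"
  shows "card {i\<in>{1..n+1}. score (\<lambda>k\<in>{1..n+1}. p (\<sigma> k)) j \<le> score (\<lambda>k\<in>{1..n+1}. p (\<sigma> k)) i}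
       = card {i\<in>{1..n+1}. score p (\<sigma> j) \<le> score p i}"
proof -
  have "{i\<in>{1..n+1}. score (\<lambda>k\<in>{1..n+1}. p (\<sigma> k)) j \<le> score (\<lambda>k\<in>{1..n+1}. p (\<sigma> k)) i}
      = {i\<in>{1..n+1}. score p (\<sigma> j) \<le> score p (\<sigma> i)}"
    using equivariant[OF j] equivariant by auto
  also have "card \<dots> = card {i\<in>{1..n+1}. score p (\<sigma> j) \<le> score p i}"
    by (rule card_filter_permutes[OF \<sigma>]) simp
  finally show ?thesis .
qed

lemma (in prob_space) sum_prob_le_of_count_le:
  assumes "finite J" and events: "\<And>j. j \<in> J \<Longrightarrow> E j \<in> events"
    and count: "\<And>\<omega>. \<omega> \<in> space M \<Longrightarrow> real (card {j\<in>J. \<omega> \<in> E j}) \<le> c"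
  shows "(\<Sum>j\<in>J. prob (E j)) \<le> c"
proof -
  have integrable: "integrable M (indicator (E j) :: 'a \<Rightarrow> real)" if "j \<in> J" for j
    using events[OF that] emeasure_finite by (simp add: less_top[symmetric])
  have "(\<Sum>j\<in>J. prob (E j)) = (\<Sum>j\<in>J. integral\<^sup>L M (indicator (E j)))"
    using events by (intro sum.cong) simp_all
  also have "\<dots> = integral\<^sup>L M (\<lambda>\<omega>. \<Sum>j\<in>J. indicator (E j) \<omega>)"
    by (rule Bochner_Integration.integral_sum[symmetric]) (rule integrable)
  also have "\<dots> \<le> integral\<^sup>L M (\<lambda>_. c)"
  proof (rule integral_mono)
    show "integrable M (\<lambda>\<omega>. \<Sum>j\<in>J. indicator (E j) \<omega> :: real)"
      using integrable by (rule Bochner_Integration.integrable_sum)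
    show "(\<Sum>j\<in>J. indicator (E j) \<omega>) \<le> c" if "\<omega> \<in> space M" for \<omega>
      using count[OF that] assms(1) by (simp add: indicator_def sum.If_cases Int_def)
  qed simp
  finally show ?thesis by (simp add: prob_space)
qed

lemma measurable_rank_event:
  fixes score :: "'p \<Rightarrow> 'i \<Rightarrow> real"
  assumes D: "D \<in> measurable M N" and score: "\<And>i. i \<in> I \<Longrightarrow> (\<lambda>p. score p i) \<in> borel_measurable N"
    and "finite I" "j \<in> I"
  shows "{\<omega>\<in>space M. real (card {i\<in>I. score (D \<omega>) j \<le> score (D \<omega>) i}) \<le> c} \<in> sets M"
proof -
  have "(\<lambda>\<omega>. \<Sum>i\<in>I. if score (D \<omega>) j \<le> score (D \<omega>) i then 1 else 0 :: real) \<in> borel_measurable M"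
  proof (rule borel_measurable_sum)
    fix i assume "i \<in> I"
    have "{\<omega>\<in>space M. score (D \<omega>) j \<le> score (D \<omega>) i} \<in> sets M"
      using measurable_compose[OF D score[OF \<open>j \<in> I\<close>]] measurable_compose[OF D score[OF \<open>i \<in> I\<close>]]
      by (rule borel_measurable_le)
    then show "(\<lambda>\<omega>. if score (D \<omega>) j \<le> score (D \<omega>) i then 1 else 0 :: real) \<in> borel_measurable M"
      by (intro measurable_If borel_measurable_const)
  qed
  then show ?thesis
    unfolding borel_measurable_iff_le card_filter_eq_sum[OF \<open>finite I\<close>] by blast
qed

lemma exchangeable_prob_permute:
  fixes Z :: "nat \<Rightarrow> 'w \<Rightarrow> 'z::topological_space"
  assumes exch: "exchangeable M n Z" and meas: "\<And>i. i \<in> {1..n+1} \<Longrightarrow> Z i \<in> borel_measurable M"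
    and sigma: "\<sigma> permutes {1..n+1}"
    and range: "\<And>\<tau> \<omega>. \<tau> permutes {1..n+1} \<Longrightarrow> \<omega> \<in> space M \<Longrightarrow> (\<lambda>i\<in>{1..n+1}. Z (\<tau> i) \<omega>) \<in> G"
    and A: "A \<in> sets (restrict_space (PiM {1..n+1} (\<lambda>_. borel)) G)"
  shows "measure M {\<omega>\<in>space M. (\<lambda>i\<in>{1..n+1}. Z (\<sigma> i) \<omega>) \<in> A}
       = measure M {\<omega>\<in>space M. (\<lambda>i\<in>{1..n+1}. Z i \<omega>) \<in> A}"
proof -
  let ?P = "PiM {1..n+1} (\<lambda>_. borel) :: (nat \<Rightarrow> 'z) measure"
  obtain B where B: "B \<in> sets ?P" "A = B \<inter> G"
    using A by (auto simp: sets_restrict_space)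
  have data_meas: "(\<lambda>\<omega>. \<lambda>i\<in>{1..n+1}. Z (\<tau> i) \<omega>) \<in> measurable M ?P" if "\<tau> permutes {1..n+1}" for \<tau>
    using meas permutes_in_image[OF that] by (intro measurable_restrict) auto
  have event: "{\<omega>\<in>space M. (\<lambda>i\<in>{1..n+1}. Z (\<tau> i) \<omega>) \<in> A}
      = (\<lambda>\<omega>. \<lambda>i\<in>{1..n+1}. Z (\<tau> i) \<omega>) -` B \<inter> space M" if "\<tau> permutes {1..n+1}" for \<tau>
    using range[OF that] B(2) by auto
  have "measure M {\<omega>\<in>space M. (\<lambda>i\<in>{1..n+1}. Z (\<sigma> i) \<omega>) \<in> A}
      = measure (distr M ?P (\<lambda>\<omega>. \<lambda>i\<in>{1..n+1}. Z (\<sigma> i) \<omega>)) B"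
    unfolding event[OF sigma] by (rule measure_distr[OF data_meas[OF sigma] B(1), symmetric])
  also have "\<dots> = measure (distr M ?P (\<lambda>\<omega>. \<lambda>i\<in>{1..n+1}. Z (id i) \<omega>)) B"
    using exch sigma by (simp add: exchangeable_def)
  also have "\<dots> = measure M {\<omega>\<in>space M. (\<lambda>i\<in>{1..n+1}. Z (id i) \<omega>) \<in> A}"
    unfolding event[OF permutes_id] by (rule measure_distr[OF data_meas[OF permutes_id] B(1)])
  finally show ?thesis by simp
qed

locale exchangeable_scores =
  fixes M :: "'w measure" and n :: nat and Z :: "nat \<Rightarrow> 'w \<Rightarrow> 'z::topological_space"
    and G :: "(nat \<Rightarrow> 'z) set" and score :: "(nat \<Rightarrow> 'z) \<Rightarrow> nat \<Rightarrow> real"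
  assumes exch: "exchangeable M n Z"
    and meas: "\<And>i. i \<in> {1..n+1} \<Longrightarrow> Z i \<in> borel_measurable M"
    and range: "\<And>\<tau> \<omega>. \<tau> permutes {1..n+1} \<Longrightarrow> \<omega> \<in> space M \<Longrightarrow> (\<lambda>i\<in>{1..n+1}. Z (\<tau> i) \<omega>) \<in> G"
    and score_meas: "\<And>i. i \<in> {1..n+1} \<Longrightarrow>
      (\<lambda>p. score p i) \<in> borel_measurable (restrict_space (PiM {1..n+1} (\<lambda>_. borel)) G)"
    and equivariant: "\<And>\<tau> p i. \<tau> permutes {1..n+1} \<Longrightarrow> i \<in> {1..n+1} \<Longrightarrow>
      score (\<lambda>k\<in>{1..n+1}. p (\<tau> k)) i = score p (\<tau> i)"
begin

abbreviation rank_event :: "nat \<Rightarrow> real \<Rightarrow> 'w set" where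
  "rank_event j c \<equiv> {\<omega>\<in>space M. real (card {i\<in>{1..n+1}.
      score (\<lambda>k\<in>{1..n+1}. Z k \<omega>) j \<le> score (\<lambda>k\<in>{1..n+1}. Z k \<omega>) i}) \<le> c}"

lemma data_measurable:
  "(\<lambda>\<omega>. \<lambda>k\<in>{1..n+1}. Z k \<omega>) \<in> measurable M (restrict_space (PiM {1..n+1} (\<lambda>_. borel)) G)"
proof (rule measurable_restrict_space2)
  show "(\<lambda>\<omega>. \<lambda>k\<in>{1..n+1}. Z k \<omega>) \<in> space M \<rightarrow> G" using range[OF permutes_id] by simp
  show "(\<lambda>\<omega>. \<lambda>k\<in>{1..n+1}. Z k \<omega>) \<in> measurable M (PiM {1..n+1} (\<lambda>_. borel))"
    using meas by (rule measurable_restrict)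
qed

lemma rank_event_measurable: "j \<in> {1..n+1} \<Longrightarrow> rank_event j c \<in> sets M"
  by (rule measurable_rank_event[OF data_measurable score_meas]) auto

lemma rank_event_measure_eq:
  assumes j: "j \<in> {1..n+1}"
  shows "measure M (rank_event j c) = measure M (rank_event (n+1) c)"
proof -
  let ?R = "restrict_space (PiM {1..n+1} (\<lambda>_. borel)) G :: (nat \<Rightarrow> 'z) measure"
  define A where "A = {p \<in> space ?R. real (card {i\<in>{1..n+1}. score p (n+1) \<le> score p i}) \<le> c}"
  have A: "A \<in> sets ?R"
    unfolding A_def by (rule measurable_rank_event[OF measurable_ident_sets[OF refl] score_meas]) auto
  have data_space: "(\<lambda>k\<in>{1..n+1}. Z (\<tau> k) \<omega>) \<in> space ?R"
    if "\<tau> permutes {1..n+1}" "\<omega> \<in> space M" for \<tau> \<omega>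
    using range[OF that] measurable_space[OF measurable_restrict, of "{1..n+1}" "\<lambda>k. Z (\<tau> k)" M "\<lambda>_. borel"]
      meas permutes_in_image[OF that(1)] that(2) by (auto simp: space_restrict_space)
  define \<sigma> where "\<sigma> = Transposition.transpose j (n+1)"
  have \<sigma>: "\<sigma> permutes {1..n+1}" using j by (simp add: \<sigma>_def permutes_swap_id)
  have \<sigma>_last: "\<sigma> (n+1) = j" by (simp add: \<sigma>_def)
  have D\<sigma>: "(\<lambda>k\<in>{1..n+1}. Z (\<sigma> k) \<omega>) = (\<lambda>k\<in>{1..n+1}. (\<lambda>k\<in>{1..n+1}. Z k \<omega>) (\<sigma> k))" for \<omega>
    using permutes_in_image[OF \<sigma>] by (intro restrict_ext) simp
  have "card {i\<in>{1..n+1}. score (\<lambda>k\<in>{1..n+1}. Z (\<sigma> k) \<omega>) (n+1) \<le> score (\<lambda>k\<in>{1..n+1}. Z (\<sigma> k) \<omega>) i}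
      = card {i\<in>{1..n+1}. score (\<lambda>k\<in>{1..n+1}. Z k \<omega>) j \<le> score (\<lambda>k\<in>{1..n+1}. Z k \<omega>) i}" for \<omega>
    unfolding D\<sigma>
    using card_rank_permute[where p = "\<lambda>k\<in>{1..n+1}. Z k \<omega>" and j = "n+1" and score = score,
        OF \<sigma> _ equivariant[OF \<sigma>]] \<sigma>_last
    by simp
  then have "rank_event j c = {\<omega>\<in>space M. (\<lambda>k\<in>{1..n+1}. Z (\<sigma> k) \<omega>) \<in> A}"
    using data_space[OF \<sigma>] by (auto simp: A_def)
  also have "measure M \<dots> = measure M {\<omega>\<in>space M. (\<lambda>k\<in>{1..n+1}. Z k \<omega>) \<in> A}"
    by (rule exchangeable_prob_permute[OF exch meas \<sigma> range A])
  also have "{\<omega>\<in>space M. (\<lambda>k\<in>{1..n+1}. Z k \<omega>) \<in> A} = rank_event (n+1) c"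
    using data_space[OF permutes_id] by (auto simp: A_def)
  finally show ?thesis .
qed

text \<open>Each of the \<open>n+1\<close> points has the same chance of ranking among the lowest, and at most
  \<open>\<alpha>(n+1)\<close> points can do so simultaneously.\<close>

lemma rank_tail:
  assumes "prob_space M" and alpha: "0 \<le> alpha"
  shows "measure M (rank_event (n+1) (alpha * real (n+1))) \<le> alpha"
proof -
  interpret prob_space M by fact
  let ?E = "\<lambda>j. rank_event j (alpha * real (n+1))"
  have "(\<Sum>j\<in>{1..n+1}. prob (?E j)) \<le> alpha * real (n+1)"
  proof (rule sum_prob_le_of_count_le)
    show "?E j \<in> events" if "j \<in> {1..n+1}" for j
      using that by (rule rank_event_measurable)
    fix \<omega> assume "\<omega> \<in> space M"
    then have "{j\<in>{1..n+1}. \<omega> \<in> ?E j} = {j\<in>{1..n+1}. real (card {i\<in>{1..n+1}.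
        score (\<lambda>k\<in>{1..n+1}. Z k \<omega>) j \<le> score (\<lambda>k\<in>{1..n+1}. Z k \<omega>) i}) \<le> alpha * real (n+1)}"
      by blast
    moreover have "real (card {j\<in>{1..n+1}. real (card {i\<in>{1..n+1}. score (\<lambda>k\<in>{1..n+1}. Z k \<omega>) j
        \<le> score (\<lambda>k\<in>{1..n+1}. Z k \<omega>) i}) \<le> alpha * real (n+1)}) \<le> alpha * real (n+1)"
      using alpha by (intro card_low_rank_le) auto
    ultimately show "real (card {j\<in>{1..n+1}. \<omega> \<in> ?E j}) \<le> alpha * real (n+1)"
      by (simp only:)
  qed simp
  moreover have "(\<Sum>j\<in>{1..n+1}. prob (?E j)) = (\<Sum>j\<in>{1..n+1}. prob (?E (n+1)))"
    by (rule sum.cong[OF refl rank_event_measure_eq])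
  ultimately have "real (n+1) * prob (?E (n+1)) \<le> real (n+1) * alpha"
    by (simp add: mult.commute)
  then show ?thesis by simp
qed

end

lemma sqrt_kern_mult: "sqrt (kern Phi a a * kern Phi b b) = norm (Phi a) * norm (Phi b)"
  by (simp add: kern_def real_sqrt_mult flip: power2_norm_eq_inner)

lemma reg_risk_cong:
  assumes "\<And>i. i \<in> {1..n+1} \<Longrightarrow> xs i = xs' i" and "\<And>i. i \<in> {1..n+1} \<Longrightarrow> ys i = ys' i"
  shows "reg_risk l Phi lam n xs ys = reg_risk l Phi lam n xs' ys'"
proof
  fix w
  have "(\<Sum>i=1..n+1. l (ys i) (w \<bullet> Phi (xs i))) = (\<Sum>i=1..n+1. l (ys' i) (w \<bullet> Phi (xs' i)))"
    using assms by (intro sum.cong) auto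
  then show "reg_risk l Phi lam n xs ys w = reg_risk l Phi lam n xs' ys' w"
    by (simp only: reg_risk_def)
qed

lemma reg_risk_permute:
  assumes "\<sigma> permutes {1..n+1}"
  shows "reg_risk l Phi lam n (\<lambda>i. xs (\<sigma> i)) (\<lambda>i. ys (\<sigma> i)) = reg_risk l Phi lam n xs ys"
proof
  fix w
  have "(\<Sum>i=1..n+1. l (ys (\<sigma> i)) (w \<bullet> Phi (xs (\<sigma> i)))) = (\<Sum>i=1..n+1. l (ys i) (w \<bullet> Phi (xs i)))"
    using sum.permute[OF assms, of "\<lambda>i. l (ys i) (w \<bullet> Phi (xs i))"] unfolding comp_def by (rule sym)
  then show "reg_risk l Phi lam n (\<lambda>i. xs (\<sigma> i)) (\<lambda>i. ys (\<sigma> i)) w = reg_risk l Phi lam n xs ys w"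
    by (simp only: reg_risk_def)
qed

lemma fhat_cong:
  "reg_risk l Phi lam n xs (ys(n+1 := y)) = reg_risk l Phi lam n xs' (ys'(n+1 := y'))
    \<Longrightarrow> fhat l Phi lam n xs ys y = fhat l Phi lam n xs' ys' y'"
  unfolding fhat_def by simp

definition rat_coeffs :: "rat list \<Rightarrow> nat \<Rightarrow> real" where
  "rat_coeffs qs k = (if k < length qs then real_of_rat (qs ! k) else 0)"

definition feature_comb :: "('x \<Rightarrow> 'h::real_inner) \<Rightarrow> nat \<Rightarrow> (nat \<Rightarrow> 'x) \<Rightarrow> (nat \<Rightarrow> real) \<Rightarrow> 'h" where
  "feature_comb Phi n xs a = (\<Sum>k=1..n+1. a k *\<^sub>R Phi (xs k))"

lemma ex_rat_sqrt_slack: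
  assumes lam: "lam > 0" and gap: "gap > 0" and K: "K \<ge> 0"
  shows "\<exists>r::rat. 0 < r \<and> sqrt (real_of_rat r / lam) * K < gap / 2"
proof -
  have K1: "K + 1 > 0" using K by simp
  obtain r' where "r' \<in> \<rat>" "0 < r'" "r' < lam * (gap / (2 * (K + 1)))\<^sup>2"
    using Rats_dense_in_real[of 0 "lam * (gap / (2 * (K + 1)))\<^sup>2"] gap K1 lam by auto
  then obtain r :: rat where r: "0 < real_of_rat r" "real_of_rat r < lam * (gap / (2 * (K + 1)))\<^sup>2"
    by (auto elim!: Rats_cases)
  have "real_of_rat r / lam < (gap / (2 * (K + 1)))\<^sup>2"
    using r(2) lam by (simp add: divide_less_eq mult.commute)
  then have "sqrt (real_of_rat r / lam) < gap / (2 * (K + 1))"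
    using real_sqrt_less_mono gap K1 by fastforce
  then have "sqrt (real_of_rat r / lam) * K \<le> gap / (2 * (K + 1)) * K"
    using K by (intro mult_right_mono) simp_all
  also have "\<dots> < gap / 2"
    using gap K1 by (simp add: field_simps)
  finally show ?thesis using r(1) by (intro exI[of _ r]) simp
qed

lemma rat_coeffs_approx:
  fixes a :: "nat \<Rightarrow> real"
  assumes "e > 0"
  shows "\<exists>qs. \<forall>k\<in>{1..n+1}. \<bar>rat_coeffs qs k - a k\<bar> < e"
proof -
  have "\<exists>q::rat. \<bar>real_of_rat q - a k\<bar> < e" for k
  proof -
    obtain r where "r \<in> \<rat>" "a k - e < r" "r < a k + e"
      using Rats_dense_in_real[of "a k - e" "a k + e"] assms by auto
    then obtain q :: rat where "a k - e < real_of_rat q" "real_of_rat q < a k + e"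
      by (auto elim!: Rats_cases)
    then show ?thesis by (intro exI[of _ q]) (auto simp: abs_less_iff)
  qed
  then obtain q :: "nat \<Rightarrow> rat" where q: "\<And>k. \<bar>real_of_rat (q k) - a k\<bar> < e" by metis
  have "rat_coeffs (map q [0..<n+2]) k = real_of_rat (q k)" if "k \<in> {1..n+1}" for k
    using that by (simp add: rat_coeffs_def del: upt_Suc)
  then show ?thesis using q by metis
qed

lemma feature_comb_inner:
  "feature_comb Phi n xs a \<bullet> Phi x = (\<Sum>k=1..n+1. a k * kern Phi (xs k) x)"
  by (simp add: feature_comb_def kern_def inner_sum_left del: sum.cl_ivl_Suc)

lemma reg_risk_feature_comb:
  "reg_risk l Phi lam n xs ys (feature_comb Phi n xs a)
   = (\<Sum>i=1..n+1. l (ys i) (\<Sum>k=1..n+1. a k * kern Phi (xs k) (xs i))) / real (n+1)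
     + lam * (\<Sum>k=1..n+1. \<Sum>m=1..n+1. a k * a m * kern Phi (xs k) (xs m))"
proof -
  have "(norm (feature_comb Phi n xs a))\<^sup>2 = (\<Sum>k=1..n+1. \<Sum>m=1..n+1. a k * a m * kern Phi (xs k) (xs m))"
    unfolding power2_norm_eq_inner feature_comb_def kern_def
    by (simp add: inner_sum_left inner_sum_right sum_distrib_left mult.assoc mult.left_commute
        del: sum.cl_ivl_Suc) (simp add: inner_commute)
  then show ?thesis by (simp add: reg_risk_def feature_comb_inner)
qed

text \<open>Labels are confined to \<open>YY\<close> because the loss and the score are only assumed
  measurable on \<open>YY \<times> \<real>\<close>.\<close>

definition labelled_data :: "real set \<Rightarrow> nat \<Rightarrow> (nat \<Rightarrow> 'x::topological_space \<times> real) measure" where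
  "labelled_data YY n =
     restrict_space (PiM {1..n+1} (\<lambda>_. borel)) {p. \<forall>i\<in>{1..n+1}. snd (p i) \<in> YY}"

definition fitted_value ::
  "(real \<Rightarrow> real \<Rightarrow> real) \<Rightarrow> ('x \<Rightarrow> 'h::real_inner) \<Rightarrow> real \<Rightarrow> nat \<Rightarrow> (nat \<Rightarrow> 'x \<times> real) \<Rightarrow> nat \<Rightarrow> real"
  where
  "fitted_value l Phi lam n p j =
     fhat l Phi lam n (\<lambda>i. fst (p i)) (\<lambda>i. snd (p i)) (snd (p (n+1))) \<bullet> Phi (fst (p j))"

lemma space_labelled_data:
  "space (labelled_data YY n) = {p \<in> space (PiM {1..n+1} (\<lambda>_. borel)). \<forall>i\<in>{1..n+1}. snd (p i) \<in> YY}"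
  by (auto simp: labelled_data_def space_restrict_space)

lemma fitted_value_relabel:
  assumes "\<And>i. i \<in> {1..n} \<Longrightarrow> ys' i = ys i" and "ys' (n+1) = y" and j: "j \<in> {1..n+1}"
  shows "fitted_value l Phi lam n (\<lambda>i\<in>{1..n+1}. (xs i, ys' i)) j = fhat l Phi lam n xs ys y \<bullet> Phi (xs j)"
proof -
  define p where "p = (\<lambda>i\<in>{1..n+1}. (xs i, ys' i))"
  have "fhat l Phi lam n (\<lambda>i. fst (p i)) (\<lambda>i. snd (p i)) (snd (p (n+1))) = fhat l Phi lam n xs ys y"
    using assms(1,2) by (intro fhat_cong reg_risk_cong) (auto simp: p_def)
  then show ?thesis using j by (simp add: fitted_value_def p_def)
qed

lemma fitted_value_permute:
  assumes \<sigma>: "\<sigma> permutes {1..n+1}" and i: "i \<in> {1..n+1}"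
  shows "fitted_value l Phi lam n (\<lambda>k\<in>{1..n+1}. p (\<sigma> k)) i = fitted_value l Phi lam n p (\<sigma> i)"
proof -
  let ?q = "\<lambda>k\<in>{1..n+1}. p (\<sigma> k)"
  have "reg_risk l Phi lam n (\<lambda>k. fst (?q k)) ((\<lambda>k. snd (?q k))(n+1 := snd (?q (n+1))))
      = reg_risk l Phi lam n (\<lambda>k. fst (p (\<sigma> k))) (\<lambda>k. snd (p (\<sigma> k)))"
    by (rule reg_risk_cong) auto
  also have "\<dots> = reg_risk l Phi lam n (\<lambda>k. fst (p k)) (\<lambda>k. snd (p k))"
    by (rule reg_risk_permute[OF \<sigma>])
  also have "\<dots> = reg_risk l Phi lam n (\<lambda>k. fst (p k)) ((\<lambda>k. snd (p k))(n+1 := snd (p (n+1))))"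
    by (rule reg_risk_cong) auto
  finally have "fhat l Phi lam n (\<lambda>k. fst (?q k)) (\<lambda>k. snd (?q k)) (snd (?q (n+1)))
      = fhat l Phi lam n (\<lambda>k. fst (p k)) (\<lambda>k. snd (p k)) (snd (p (n+1)))"
    by (rule fhat_cong)
  then show ?thesis
    using i by (simp add: fitted_value_def)
qed

lemma pval_up_mono:
  assumes "\<And>i. tau i y \<le> tau' i y"
  shows "pval_up l s Phi lam n xs ys z tau y \<le> pval_up l s Phi lam n xs ys z tau' y"
proof -
  let ?w = "fhat l Phi lam n xs ys z"
  have "card {i\<in>{1..n}. s (ys i) (?w \<bullet> Phi (xs i)) + tau i y \<ge> s y (?w \<bullet> Phi (xs (n+1))) - tau (n+1) y}
      \<le> card {i\<in>{1..n}. s (ys i) (?w \<bullet> Phi (xs i)) + tau' i y \<ge> s y (?w \<bullet> Phi (xs (n+1))) - tau' (n+1) y}"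
  proof (rule card_mono[OF _ subsetI])
    fix i assume "i \<in> {i\<in>{1..n}. s (ys i) (?w \<bullet> Phi (xs i)) + tau i y \<ge> s y (?w \<bullet> Phi (xs (n+1))) - tau (n+1) y}"
    then show "i \<in> {i\<in>{1..n}. s (ys i) (?w \<bullet> Phi (xs i)) + tau' i y \<ge> s y (?w \<bullet> Phi (xs (n+1))) - tau' (n+1) y}"
      using assms[of i] assms[of "n+1"] by auto
  qed simp
  then show ?thesis
    unfolding pval_up_def Let_def by (simp add: divide_right_mono)
qed

lemma C_up_mono:
  assumes "\<And>i y. y \<in> YY \<Longrightarrow> tau i y \<le> tau' i y"
  shows "C_up YY l s Phi lam alpha n xs ys z tau \<subseteq> C_up YY l s Phi lam alpha n xs ys z tau'"
proof
  fix y assume "y \<in> C_up YY l s Phi lam alpha n xs ys z tau"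
  then have y: "y \<in> YY" and "alpha < pval_up l s Phi lam n xs ys z tau y"
    by (auto simp: C_up_def)
  moreover have "pval_up l s Phi lam n xs ys z tau y \<le> pval_up l s Phi lam n xs ys z tau' y"
    using assms[OF y] by (rule pval_up_mono)
  ultimately show "y \<in> C_up YY l s Phi lam alpha n xs ys z tau'"
    by (simp add: C_up_def)
qed

lemma pval_full_le_pval_up:
  assumes "\<And>i. i \<in> {1..n} \<Longrightarrow>
      \<bar>s (ys i) (fhat l Phi lam n xs ys y \<bullet> Phi (xs i)) - s (ys i) (fhat l Phi lam n xs ys z \<bullet> Phi (xs i))\<bar>
      \<le> tau i y"
    and "\<bar>s y (fhat l Phi lam n xs ys y \<bullet> Phi (xs (n+1))) - s y (fhat l Phi lam n xs ys z \<bullet> Phi (xs (n+1)))\<bar>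
      \<le> tau (n+1) y"
  shows "pval_full l s Phi lam n xs ys y \<le> pval_up l s Phi lam n xs ys z tau y"
proof -
  let ?w = "fhat l Phi lam n xs ys y" and ?w' = "fhat l Phi lam n xs ys z"
  have "card {i\<in>{1..n}. s (ys i) (?w \<bullet> Phi (xs i)) \<ge> s y (?w \<bullet> Phi (xs (n+1)))}
      \<le> card {i\<in>{1..n}. s (ys i) (?w' \<bullet> Phi (xs i)) + tau i y \<ge> s y (?w' \<bullet> Phi (xs (n+1))) - tau (n+1) y}"
  proof (rule card_mono[OF _ subsetI])
    fix i assume "i \<in> {i\<in>{1..n}. s (ys i) (?w \<bullet> Phi (xs i)) \<ge> s y (?w \<bullet> Phi (xs (n+1)))}"
    then show "i \<in> {i\<in>{1..n}. s (ys i) (?w' \<bullet> Phi (xs i)) + tau i y \<ge> s y (?w' \<bullet> Phi (xs (n+1))) - tau (n+1) y}"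
      using assms(1)[of i] assms(2) by (auto simp: abs_le_iff)
  qed simp
  then show ?thesis
    unfolding pval_full_def pval_up_def Let_def by (simp add: divide_right_mono)
qed

lemma pval_full_le_iff_rank:
  fixes l s :: "real \<Rightarrow> real \<Rightarrow> real" and Phi :: "'x \<Rightarrow> 'h::real_inner"
    and xs :: "nat \<Rightarrow> 'x" and ys :: "nat \<Rightarrow> real" and lam :: real and n :: nat
  defines "T \<equiv> \<lambda>i. s (ys i) (fhat l Phi lam n xs ys (ys (n+1)) \<bullet> Phi (xs i))"
  shows "pval_full l s Phi lam n xs ys (ys (n+1)) \<le> alpha
    \<longleftrightarrow> real (card {i\<in>{1..n+1}. T (n+1) \<le> T i}) \<le> alpha * real (n+1)"
proof -
  have "{i\<in>{1..n+1}. T (n+1) \<le> T i} = insert (n+1) {i\<in>{1..n}. T (n+1) \<le> T i}" by auto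
  then have "card {i\<in>{1..n+1}. T (n+1) \<le> T i} = 1 + card {i\<in>{1..n}. T (n+1) \<le> T i}" by simp
  then show ?thesis
    unfolding pval_full_def Let_def T_def by (simp add: divide_le_eq mult.commute)
qed

lemma leb_outer_mono: "A \<subseteq> B \<Longrightarrow> leb_outer A \<le> leb_outer B"
  unfolding leb_outer_def by (rule INF_superset_mono) auto

section \<open>Measurability on the space of labelled data\<close>

lemma measurable_labelled_data_fst:
  "i \<in> {1..n+1} \<Longrightarrow> (\<lambda>p. fst (p i)) \<in> borel_measurable (labelled_data YY n)"
  unfolding labelled_data_def
  by (intro measurable_restrict_space1 measurable_compose[OF measurable_component_singleton]
      borel_measurable_continuous_onI continuous_on_fst continuous_on_id)

lemma measurable_labelled_data_snd:
  "i \<in> {1..n+1} \<Longrightarrow> (\<lambda>p. snd (p i)) \<in> borel_measurable (labelled_data YY n)"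
  unfolding labelled_data_def
  by (intro measurable_restrict_space1 measurable_compose[OF measurable_component_singleton]
      borel_measurable_continuous_onI continuous_on_snd continuous_on_id)

lemma measurable_labelled_data_kern:
  fixes Phi :: "'x::second_countable_topology \<Rightarrow> 'h::real_inner"
  assumes "(\<lambda>(x, x'). kern Phi x x') \<in> borel_measurable (borel :: ('x \<times> 'x) measure)"
    and "k \<in> {1..n+1}" "m \<in> {1..n+1}"
  shows "(\<lambda>p. kern Phi (fst (p k)) (fst (p m))) \<in> borel_measurable (labelled_data YY n)"
  using measurable_compose[OF borel_measurable_Pair[OF measurable_labelled_data_fst[OF assms(2)]
      measurable_labelled_data_fst[OF assms(3)]] assms(1)] by simp

lemma measurable_into_labelled_data:
  fixes X :: "nat \<Rightarrow> 'w \<Rightarrow> 'x::second_countable_topology"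
  assumes "\<And>i. i \<in> {1..n+1} \<Longrightarrow> X i \<in> borel_measurable M"
    and "\<And>i. i \<in> {1..n+1} \<Longrightarrow> Y i \<in> borel_measurable M"
    and "\<And>i \<omega>. i \<in> {1..n+1} \<Longrightarrow> \<omega> \<in> space M \<Longrightarrow> Y i \<omega> \<in> YY"
  shows "(\<lambda>\<omega>. \<lambda>i\<in>{1..n+1}. (X i \<omega>, Y i \<omega>)) \<in> measurable M (labelled_data YY n)"
  unfolding labelled_data_def using assms
  by (intro measurable_restrict_space2 measurable_restrict borel_measurable_Pair) auto

lemma borel_measurable_restricted_comp:
  fixes h :: "real \<Rightarrow> real \<Rightarrow> real"
  assumes h: "(\<lambda>(y, u). h y u) \<in> borel_measurable (restrict_space borel (A \<times> UNIV))"
    and f: "f \<in> borel_measurable N" and g: "g \<in> borel_measurable N"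
    and f_range: "\<And>x. x \<in> space N \<Longrightarrow> f x \<in> A"
  shows "(\<lambda>x. h (f x) (g x)) \<in> borel_measurable N"
proof -
  have "(\<lambda>x. (f x, g x)) \<in> measurable N (restrict_space borel (A \<times> UNIV))"
    using f_range by (intro measurable_restrict_space2 borel_measurable_Pair f g) auto
  from measurable_compose[OF this h] show ?thesis by simp
qed

lemma borel_measurable_restricted_deriv:
  fixes l :: "real \<Rightarrow> real \<Rightarrow> real"
  assumes l: "(\<lambda>(y, u). l y u) \<in> borel_measurable (restrict_space borel (A \<times> UNIV))"
    and deriv: "\<And>y u. y \<in> A \<Longrightarrow> (l y has_real_derivative deriv (l y) u) (at u)"
  shows "(\<lambda>(y, u). deriv (l y) u) \<in> borel_measurable (restrict_space borel (A \<times> UNIV))"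
proof (rule borel_measurable_LIMSEQ_real)
  let ?h = "\<lambda>k. inverse (real (Suc k))"
  let ?S = "restrict_space borel (A \<times> UNIV) :: (real \<times> real) measure"
  fix x assume "x \<in> space ?S"
  then obtain y u where x: "x = (y, u)" and y: "y \<in> A" by (auto simp: space_restrict_space)
  have "filterlim ?h (at 0) sequentially"
    using LIMSEQ_inverse_real_of_nat by (simp add: filterlim_at)
  from filterlim_compose[OF deriv[OF y, of u, unfolded DERIV_def] this]
  show "(\<lambda>k. case x of (y, u) \<Rightarrow> (l y (u + ?h k) - l y u) / ?h k)
      \<longlonglongrightarrow> (case x of (y, u) \<Rightarrow> deriv (l y) u)"
    by (simp add: x)
next
  let ?S = "restrict_space borel (A \<times> UNIV) :: (real \<times> real) measure"
  fix k
  have fst: "fst \<in> borel_measurable ?S" and snd: "(\<lambda>x. snd x + c) \<in> borel_measurable ?S" for c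
    by (intro measurable_restrict_space1 borel_measurable_continuous_onI continuous_intros)+
  have "(\<lambda>x. (l (fst x) (snd x + inverse (real (Suc k))) - l (fst x) (snd x + 0))
      / inverse (real (Suc k))) \<in> borel_measurable ?S"
    by (intro borel_measurable_divide borel_measurable_diff borel_measurable_const
        borel_measurable_restricted_comp[OF l fst snd]) (auto simp: space_restrict_space)
  then show "(\<lambda>x. case x of (y, u) \<Rightarrow> (l y (u + inverse (real (Suc k))) - l y u)
      / inverse (real (Suc k))) \<in> borel_measurable ?S"
    by (simp add: case_prod_beta')
qed

section \<open>Regularized empirical risk minimization with a convex Lipschitz loss\<close>

locale regularized_erm =
  fixes l :: "real \<Rightarrow> real \<Rightarrow> real" and YY :: "real set" and rho lam :: real
  assumes lam_pos: "lam > 0"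
    and loss_convex: "\<And>y. y \<in> YY \<Longrightarrow> convex_on UNIV (l y)"
    and loss_lipschitz: "\<And>y. y \<in> YY \<Longrightarrow> rho-lipschitz_on UNIV (l y)"
    and loss_deriv: "\<And>y u. y \<in> YY \<Longrightarrow> (l y has_real_derivative deriv (l y) u) (at u)"
begin

lemma loss_above_tangent: "y \<in> YY \<Longrightarrow> l y a + deriv (l y) a * (b - a) \<le> l y b"
  using convex_on_imp_above_tangent[OF loss_convex connected_UNIV, of y a b "deriv (l y) a"]
    loss_deriv[of y a]
  by (simp add: algebra_simps)

lemma loss_deriv_monotone: "y \<in> YY \<Longrightarrow> 0 \<le> (deriv (l y) b - deriv (l y) a) * (b - a)"
  using loss_above_tangent[of y a b] loss_above_tangent[of y b a] by (simp add: algebra_simps)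

lemma loss_deriv_bound: "y \<in> YY \<Longrightarrow> \<bar>deriv (l y) u\<bar> \<le> rho"
  using lipschitz_on_deriv_bound[OF loss_lipschitz loss_deriv] .

lemma reg_risk_continuous:
  assumes labels: "ys ` {1..n+1} \<subseteq> YY"
  shows "continuous_on UNIV (reg_risk l Phi lam n xs ys)"
proof -
  have loss_cont: "continuous_on UNIV (\<lambda>w. l (ys i) (w \<bullet> Phi (xs i)))" if "i \<in> {1..n+1}" for i
  proof (rule continuous_on_compose2[of UNIV "l (ys i)"])
    show "continuous_on UNIV (l (ys i))"
      using labels that by (intro lipschitz_on_continuous_on[OF loss_lipschitz]) auto
  qed (auto intro: continuous_on_inner continuous_on_id continuous_on_const)
  have risk_eq: "reg_risk l Phi lam n xs ys
      = (\<lambda>w. (\<Sum>i=1..n+1. l (ys i) (w \<bullet> Phi (xs i))) / real (n+1) + lam * (norm w)\<^sup>2)"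
    by (rule ext) (simp only: reg_risk_def)
  show ?thesis
    unfolding risk_eq
    by (intro continuous_on_add continuous_on_divide continuous_on_sum continuous_on_mult
        continuous_on_const continuous_on_power continuous_on_norm continuous_on_id loss_cont) auto
qed

lemma reg_risk_midpoint:
  assumes labels: "ys ` {1..n+1} \<subseteq> YY"
  shows "reg_risk l Phi lam n xs ys (midpoint a b) + lam / 4 * (norm (a - b))\<^sup>2
    \<le> (reg_risk l Phi lam n xs ys a + reg_risk l Phi lam n xs ys b) / 2"
proof -
  let ?L = "\<lambda>v. \<Sum>i=1..n+1. l (ys i) (v \<bullet> Phi (xs i))"
  have "l (ys i) (midpoint a b \<bullet> Phi (xs i))
      \<le> (l (ys i) (a \<bullet> Phi (xs i)) + l (ys i) (b \<bullet> Phi (xs i))) / 2" if "i \<in> {1..n+1}" for i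
  proof -
    have "ys i \<in> YY" using labels that by (auto simp: image_subset_iff)
    have "midpoint a b \<bullet> Phi (xs i) = (1 - 1/2) *\<^sub>R (a \<bullet> Phi (xs i)) + (1/2) *\<^sub>R (b \<bullet> Phi (xs i))"
      by (simp add: midpoint_def algebra_simps)
    with convex_onD[OF loss_convex[OF \<open>ys i \<in> YY\<close>], of "1/2" "a \<bullet> Phi (xs i)" "b \<bullet> Phi (xs i)"]
    show ?thesis by simp
  qed
  then have "?L (midpoint a b) \<le> (\<Sum>i=1..n+1. (l (ys i) (a \<bullet> Phi (xs i)) + l (ys i) (b \<bullet> Phi (xs i))) / 2)"
    by (rule sum_mono)
  then have "?L (midpoint a b) \<le> (?L a + ?L b) / 2"
    by (simp add: sum.distrib sum_divide_distrib[symmetric] del: sum.cl_ivl_Suc)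
  then have "?L (midpoint a b) / real (n+1) \<le> ((?L a + ?L b) / 2) / real (n+1)"
    by (rule divide_right_mono) simp
  also have "\<dots> = (?L a / real (n+1) + ?L b / real (n+1)) / 2"
    by (simp only: add_divide_distrib divide_divide_eq_left mult.commute)
  finally have risk_avg: "?L (midpoint a b) / real (n+1) \<le> (?L a / real (n+1) + ?L b / real (n+1)) / 2" .
  have norm_avg: "lam * (norm (midpoint a b))\<^sup>2 + lam / 4 * (norm (a - b))\<^sup>2
      = (lam * (norm a)\<^sup>2 + lam * (norm b)\<^sup>2) / 2"
    unfolding norm_midpoint_squared by (simp add: field_simps)
  show ?thesis
    using risk_avg norm_avg unfolding reg_risk_def by argo
qed

lemma reg_risk_bdd_below:
  assumes labels: "ys ` {1..n+1} \<subseteq> YY"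
  shows "bdd_below (range (reg_risk l Phi lam n xs ys))"
proof -
  define A where "A = (\<Sum>i=1..n+1. l (ys i) 0) / real (n+1)"
  define B where "B = rho * (\<Sum>i=1..n+1. norm (Phi (xs i))) / real (n+1)"
  have "ys 1 \<in> YY" using labels by (auto simp: image_subset_iff)
  then have rho: "rho \<ge> 0" using lipschitz_on_nonneg[OF loss_lipschitz] by blast
  have loss_bound: "A - B * norm w \<le> (\<Sum>i=1..n+1. l (ys i) (w \<bullet> Phi (xs i))) / real (n+1)" for w
  proof -
    have "l (ys i) 0 - rho * norm (Phi (xs i)) * norm w \<le> l (ys i) (w \<bullet> Phi (xs i))"
      if "i \<in> {1..n+1}" for i
    proof -
      have "ys i \<in> YY" using labels that by (auto simp: image_subset_iff)
      then have "\<bar>l (ys i) (w \<bullet> Phi (xs i)) - l (ys i) 0\<bar> \<le> rho * \<bar>w \<bullet> Phi (xs i)\<bar>"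
        using lipschitz_onD[OF loss_lipschitz, of "ys i" "w \<bullet> Phi (xs i)" 0]
        by (simp add: dist_real_def)
      also have "\<dots> \<le> rho * (norm (Phi (xs i)) * norm w)"
        using Cauchy_Schwarz_ineq2[of w "Phi (xs i)"] rho by (simp add: mult_left_mono mult.commute)
      finally show ?thesis by (simp add: abs_le_iff algebra_simps)
    qed
    then have "(\<Sum>i=1..n+1. l (ys i) 0 - rho * norm (Phi (xs i)) * norm w)
        \<le> (\<Sum>i=1..n+1. l (ys i) (w \<bullet> Phi (xs i)))"
      by (rule sum_mono)
    then have "(\<Sum>i=1..n+1. l (ys i) 0) - rho * (\<Sum>i=1..n+1. norm (Phi (xs i))) * norm w
        \<le> (\<Sum>i=1..n+1. l (ys i) (w \<bullet> Phi (xs i)))"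
      by (simp add: sum_subtractf sum_distrib_left sum_distrib_right del: sum.cl_ivl_Suc)
    then show ?thesis
      unfolding A_def B_def by (simp add: divide_right_mono diff_divide_distrib[symmetric])
  qed
  have square_bound: "B * t - lam * t\<^sup>2 \<le> B\<^sup>2 / (4 * lam)" for t
  proof -
    have "0 \<le> lam * (t - B / (2 * lam))\<^sup>2" using lam_pos by simp
    also have "\<dots> = lam * t\<^sup>2 - B * t + B\<^sup>2 / (4 * lam)"
      using lam_pos by (simp add: power2_eq_square field_simps)
    finally show ?thesis by simp
  qed
  have "A - B\<^sup>2 / (4 * lam) \<le> reg_risk l Phi lam n xs ys w" for w
    using loss_bound[of w] square_bound[of "norm w"] unfolding reg_risk_def by linarith
  then show ?thesis by (intro bdd_belowI2)
qed

lemma reg_risk_has_minimizer: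
  fixes Phi :: "'x \<Rightarrow> 'h::{real_inner,complete_space}"
  assumes "ys ` {1..n+1} \<subseteq> YY"
  shows "\<exists>w. minimizes (reg_risk l Phi lam n xs ys) w"
  using lam_pos
  by (intro strongly_midconvex_has_minimizer[OF _ reg_risk_continuous[OF assms]
        reg_risk_bdd_below[OF assms] reg_risk_midpoint[OF assms]]) simp

lemma fhat_minimizes:
  fixes Phi :: "'x \<Rightarrow> 'h::{real_inner,complete_space}"
  assumes "ys ` {1..n} \<subseteq> YY" "y \<in> YY"
  shows "minimizes (reg_risk l Phi lam n xs (ys(n+1 := y))) (fhat l Phi lam n xs ys y)"
proof -
  have "(ys(n+1 := y)) ` {1..n+1} \<subseteq> YY" using assms by auto
  from someI_ex[OF reg_risk_has_minimizer[OF this]] show ?thesis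
    unfolding fhat_def minimizes_def .
qed

lemma reg_risk_first_order:
  assumes labels: "ys ` {1..n+1} \<subseteq> YY" and min: "minimizes (reg_risk l Phi lam n xs ys) w"
  shows "(\<Sum>i=1..n+1. deriv (l (ys i)) (w \<bullet> Phi (xs i)) * (d \<bullet> Phi (xs i))) / real (n+1)
    + 2 * lam * (w \<bullet> d) = 0"
proof -
  have loss_line: "((\<lambda>t. l (ys i) ((w + t *\<^sub>R d) \<bullet> Phi (xs i))) has_real_derivative
      deriv (l (ys i)) (w \<bullet> Phi (xs i)) * (d \<bullet> Phi (xs i))) (at 0)" if "i \<in> {1..n+1}" for i
  proof -
    have inner_line: "((\<lambda>t. (w + t *\<^sub>R d) \<bullet> Phi (xs i)) has_real_derivative d \<bullet> Phi (xs i)) (at 0)"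
      unfolding inner_add_left inner_scaleR_left by (auto intro!: derivative_eq_intros)
    have "ys i \<in> YY" using labels that by (auto simp: image_subset_iff)
    then have "(l (ys i) has_real_derivative deriv (l (ys i)) (w \<bullet> Phi (xs i)))
        (at ((w + 0 *\<^sub>R d) \<bullet> Phi (xs i)))"
      using loss_deriv by simp
    from DERIV_chain2[OF this inner_line] show ?thesis .
  qed
  have "(norm (w + t *\<^sub>R d))\<^sup>2 = w \<bullet> w + 2 * t * (w \<bullet> d) + t\<^sup>2 * (d \<bullet> d)" for t
    unfolding power2_norm_eq_inner
    by (simp add: inner_commute power2_eq_square algebra_simps)
  then have norm_line: "((\<lambda>t. (norm (w + t *\<^sub>R d))\<^sup>2) has_real_derivative 2 * (w \<bullet> d)) (at 0)"
    by (auto intro!: derivative_eq_intros)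
  have "((\<lambda>t. reg_risk l Phi lam n xs ys (w + t *\<^sub>R d)) has_real_derivative
      (\<Sum>i=1..n+1. deriv (l (ys i)) (w \<bullet> Phi (xs i)) * (d \<bullet> Phi (xs i))) / real (n+1)
        + lam * (2 * (w \<bullet> d))) (at 0)"
    unfolding reg_risk_def
    by (intro DERIV_add DERIV_cdivide DERIV_sum DERIV_cmult loss_line norm_line)
  moreover have "\<forall>t. \<bar>0 - t\<bar> < 1 \<longrightarrow>
      reg_risk l Phi lam n xs ys (w + 0 *\<^sub>R d) \<le> reg_risk l Phi lam n xs ys (w + t *\<^sub>R d)"
    using min by (simp add: minimizes_def)
  ultimately have "(\<Sum>i=1..n+1. deriv (l (ys i)) (w \<bullet> Phi (xs i)) * (d \<bullet> Phi (xs i))) / real (n+1)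
      + lam * (2 * (w \<bullet> d)) = 0"
    by (rule DERIV_local_min[OF _ zero_less_one])
  then show ?thesis by (simp add: mult.assoc mult.left_commute[of lam])
qed

lemma reg_risk_representer:
  assumes labels: "ys ` {1..n+1} \<subseteq> YY" and min: "minimizes (reg_risk l Phi lam n xs ys) w"
  shows "w = (\<Sum>i=1..n+1. (- deriv (l (ys i)) (w \<bullet> Phi (xs i)) / (2 * lam * real (n+1)))
                             *\<^sub>R Phi (xs i))"
proof -
  define g where
    "g = (\<Sum>i=1..n+1. (deriv (l (ys i)) (w \<bullet> Phi (xs i)) / real (n+1)) *\<^sub>R Phi (xs i))"
  have "g \<bullet> d = (\<Sum>i=1..n+1. deriv (l (ys i)) (w \<bullet> Phi (xs i)) * (d \<bullet> Phi (xs i))) / real (n+1)"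
    for d
    unfolding g_def inner_sum_left sum_divide_distrib by (simp add: inner_commute)
  then have "(g + (2 * lam) *\<^sub>R w) \<bullet> d = 0" for d
    using reg_risk_first_order[OF labels min, of d] by (simp add: inner_add_left)
  from this[of "g + (2 * lam) *\<^sub>R w"] have scaled: "(2 * lam) *\<^sub>R w = - g"
    by (simp add: eq_neg_iff_add_eq_0 add.commute)
  have "w = (1 / (2 * lam)) *\<^sub>R ((2 * lam) *\<^sub>R w)"
    using lam_pos by simp
  also have "\<dots> = (- 1 / (2 * lam)) *\<^sub>R g"
    unfolding scaled by simp
  also have "\<dots> = (\<Sum>i=1..n+1. (- deriv (l (ys i)) (w \<bullet> Phi (xs i)) / (2 * lam * real (n+1)))
                             *\<^sub>R Phi (xs i))"
    unfolding g_def scaleR_sum_right by (rule sum.cong) (auto simp: field_simps)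
  finally show ?thesis .
qed

lemma reg_risk_quadratic_growth:
  assumes labels: "ys ` {1..n+1} \<subseteq> YY" and min: "minimizes (reg_risk l Phi lam n xs ys) w"
  shows "reg_risk l Phi lam n xs ys w + lam * (norm (v - w))\<^sup>2 \<le> reg_risk l Phi lam n xs ys v"
proof -
  define N where "N = real (n+1)"
  define T where "T = (\<Sum>i=1..n+1. deriv (l (ys i)) (w \<bullet> Phi (xs i)) * ((v - w) \<bullet> Phi (xs i)))"
  let ?L = "\<lambda>u. \<Sum>i=1..n+1. l (ys i) (u \<bullet> Phi (xs i))"
  have first_order: "T / N + 2 * lam * (w \<bullet> (v - w)) = 0"
    unfolding T_def N_def by (rule reg_risk_first_order[OF labels min])
  have "(\<Sum>i=1..n+1. l (ys i) (w \<bullet> Phi (xs i))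
      + deriv (l (ys i)) (w \<bullet> Phi (xs i)) * ((v - w) \<bullet> Phi (xs i))) \<le> ?L v"
  proof (rule sum_mono)
    fix i assume "i \<in> {1..n+1}"
    then have "ys i \<in> YY" using labels by (auto simp: image_subset_iff)
    from loss_above_tangent[OF this, of "w \<bullet> Phi (xs i)" "v \<bullet> Phi (xs i)"]
    show "l (ys i) (w \<bullet> Phi (xs i)) + deriv (l (ys i)) (w \<bullet> Phi (xs i)) * ((v - w) \<bullet> Phi (xs i))
        \<le> l (ys i) (v \<bullet> Phi (xs i))" by (simp add: inner_diff_left)
  qed
  then have "?L w / N + T / N \<le> ?L v / N"
    unfolding T_def N_def by (simp add: sum.distrib divide_right_mono add_divide_distrib[symmetric])
  moreover have "lam * (norm v)\<^sup>2
      = lam * (norm w)\<^sup>2 + 2 * lam * (w \<bullet> (v - w)) + lam * (norm (v - w))\<^sup>2"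
    by (simp add: power2_norm_eq_inner inner_commute algebra_simps)
  ultimately show ?thesis
    using first_order unfolding reg_risk_def N_def by linarith
qed

subsection \<open>Stability under a change of the test label\<close>

lemma minimizer_label_perturbation:
  assumes labels: "ys ` {1..n+1} \<subseteq> YY" "ys' ` {1..n+1} \<subseteq> YY"
    and min: "minimizes (reg_risk l Phi lam n xs ys) w" "minimizes (reg_risk l Phi lam n xs ys') w'"
  shows "2 * lam * real (n+1) * (norm (w - w'))\<^sup>2
    \<le> (\<Sum>i=1..n+1. (deriv (l (ys' i)) (w' \<bullet> Phi (xs i)) - deriv (l (ys i)) (w' \<bullet> Phi (xs i)))
                     * ((w - w') \<bullet> Phi (xs i)))"
proof -
  define N where "N = real (n+1)"
  define a where "a i = w \<bullet> Phi (xs i)" for i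
  define b where "b i = w' \<bullet> Phi (xs i)" for i
  have diff: "(w - w') \<bullet> Phi (xs i) = a i - b i" for i
    by (simp add: a_def b_def inner_diff_left)
  define S where "S = (\<Sum>i=1..n+1. deriv (l (ys i)) (a i) * (a i - b i))"
  define S' where "S' = (\<Sum>i=1..n+1. deriv (l (ys' i)) (b i) * (a i - b i))"
  define M where "M = (\<Sum>i=1..n+1. deriv (l (ys i)) (b i) * (a i - b i))"
  have "S / N + 2 * lam * (w \<bullet> (w - w')) = 0"
    using reg_risk_first_order[OF labels(1) min(1), of "w - w'"]
    unfolding S_def N_def diff by (simp add: a_def)
  then have first_order: "S + 2 * lam * N * (w \<bullet> (w - w')) = 0"
    by (simp add: N_def field_simps)
  have "S' / N + 2 * lam * (w' \<bullet> (w - w')) = 0"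
    using reg_risk_first_order[OF labels(2) min(2), of "w - w'"]
    unfolding S'_def N_def diff by (simp add: b_def)
  then have first_order': "S' + 2 * lam * N * (w' \<bullet> (w - w')) = 0"
    by (simp add: N_def field_simps)
  have "0 \<le> (\<Sum>i=1..n+1. (deriv (l (ys i)) (a i) - deriv (l (ys i)) (b i)) * (a i - b i))"
    using labels(1) by (intro sum_nonneg loss_deriv_monotone) (auto simp: image_subset_iff)
  then have "M \<le> S"
    unfolding M_def S_def by (simp add: left_diff_distrib sum_subtractf)
  moreover have "2 * lam * N * (norm (w - w'))\<^sup>2
      = 2 * lam * N * (w \<bullet> (w - w')) - 2 * lam * N * (w' \<bullet> (w - w'))"
    by (simp add: power2_norm_eq_inner algebra_simps)
  moreover have "(\<Sum>i=1..n+1. (deriv (l (ys' i)) (b i) - deriv (l (ys i)) (b i)) * (a i - b i)) = S' - M"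
    unfolding S'_def M_def by (simp add: left_diff_distrib sum_subtractf)
  ultimately show ?thesis
    using first_order first_order' unfolding N_def diff b_def[symmetric] by linarith
qed

lemma fhat_label_stability:
  fixes Phi :: "'x \<Rightarrow> 'h::{real_inner,complete_space}"
  assumes labels: "ys ` {1..n} \<subseteq> YY" and y: "y \<in> YY" and z: "z \<in> YY"
  shows "norm (fhat l Phi lam n xs ys y - fhat l Phi lam n xs ys z)
    \<le> rho1 l Phi lam n xs ys z y * norm (Phi (xs (n+1))) / (lam * real (n+1))"
proof -
  define w where "w = fhat l Phi lam n xs ys y"
  define w' where "w' = fhat l Phi lam n xs ys z"
  define u where "u = w' \<bullet> Phi (xs (n+1))"
  define q where "q = deriv (l z) u - deriv (l y) u"
  have "2 * lam * real (n+1) * (norm (w - w'))\<^sup>2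
    \<le> (\<Sum>i=1..n+1. (deriv (l ((ys(n+1 := z)) i)) (w' \<bullet> Phi (xs i))
                     - deriv (l ((ys(n+1 := y)) i)) (w' \<bullet> Phi (xs i))) * ((w - w') \<bullet> Phi (xs i)))"
    unfolding w_def w'_def
    by (rule minimizer_label_perturbation[OF _ _ fhat_minimizes fhat_minimizes])
      (use labels y z in auto)
  also have "\<dots> = (\<Sum>i=1..n+1. if i = n+1 then q * ((w - w') \<bullet> Phi (xs i)) else 0)"
    by (rule sum.cong) (auto simp: q_def u_def)
  also have "\<dots> = q * ((w - w') \<bullet> Phi (xs (n+1)))"
    by (subst sum.delta) auto
  also have "\<dots> \<le> \<bar>q\<bar> * (norm (w - w') * norm (Phi (xs (n+1))))"
  proof -
    have "\<bar>q * ((w - w') \<bullet> Phi (xs (n+1)))\<bar> \<le> \<bar>q\<bar> * (norm (w - w') * norm (Phi (xs (n+1))))"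
      unfolding abs_mult by (intro mult_left_mono Cauchy_Schwarz_ineq2) simp
    then show ?thesis by linarith
  qed
  finally have "(2 * lam * real (n+1) * norm (w - w')) * norm (w - w')
      \<le> (\<bar>q\<bar> * norm (Phi (xs (n+1)))) * norm (w - w')"
    by (simp add: power2_eq_square algebra_simps)
  then have "2 * lam * real (n+1) * norm (w - w') \<le> \<bar>q\<bar> * norm (Phi (xs (n+1)))"
    by (cases "norm (w - w') = 0") (simp_all add: mult_le_cancel_right)
  moreover have "\<bar>q\<bar> = 2 * rho1 l Phi lam n xs ys z y"
    by (simp add: rho1_def Let_def q_def u_def w'_def abs_minus_commute)
  ultimately have "norm (w - w') * (lam * real (n+1)) \<le> rho1 l Phi lam n xs ys z y * norm (Phi (xs (n+1)))"
    by (simp add: algebra_simps)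
  then show ?thesis
    unfolding w_def[symmetric] w'_def[symmetric] using lam_pos by (simp add: pos_le_divide_eq)
qed

lemma score_shift_le_tau1:
  fixes Phi :: "'x \<Rightarrow> 'h::{real_inner,complete_space}"
  assumes labels: "ys ` {1..n} \<subseteq> YY" and y: "y \<in> YY" and z: "z \<in> YY"
    and score_lip: "gamma-lipschitz_on UNIV (s t)"
  shows "\<bar>s t (fhat l Phi lam n xs ys y \<bullet> Phi (xs j)) - s t (fhat l Phi lam n xs ys z \<bullet> Phi (xs j))\<bar>
    \<le> tau1 l Phi gamma lam n xs ys z j y"
proof -
  define d where "d = fhat l Phi lam n xs ys y - fhat l Phi lam n xs ys z"
  have gamma: "gamma \<ge> 0" using lipschitz_on_nonneg[OF score_lip] .
  have "\<bar>s t (fhat l Phi lam n xs ys y \<bullet> Phi (xs j)) - s t (fhat l Phi lam n xs ys z \<bullet> Phi (xs j))\<bar>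
      \<le> gamma * \<bar>d \<bullet> Phi (xs j)\<bar>"
    using lipschitz_onD[OF score_lip] by (simp add: d_def dist_real_def inner_diff_left)
  also have "\<dots> \<le> gamma * (norm d * norm (Phi (xs j)))"
    using Cauchy_Schwarz_ineq2 gamma by (rule mult_left_mono)
  also have "\<dots> \<le> gamma * (rho1 l Phi lam n xs ys z y * norm (Phi (xs (n+1))) / (lam * real (n+1))
                        * norm (Phi (xs j)))"
    unfolding d_def using fhat_label_stability[OF labels y z] gamma
    by (intro mult_left_mono mult_right_mono) auto
  also have "\<dots> = tau1 l Phi gamma lam n xs ys z j y"
    by (simp add: tau1_def sqrt_kern_mult)
  finally show ?thesis .
qed

lemma tau1_le_tau0:
  assumes y: "y \<in> YY" and z: "z \<in> YY" and gamma: "gamma \<ge> 0"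
  shows "tau1 l Phi gamma lam n xs ys z i y \<le> tau0 Phi gamma rho lam n xs i y"
proof -
  define u where "u = fhat l Phi lam n xs ys z \<bullet> Phi (xs (n+1))"
  have "rho1 l Phi lam n xs ys z y \<le> rho"
    using abs_triangle_ineq4[of "deriv (l y) u" "deriv (l z) u"]
      loss_deriv_bound[OF y, of u] loss_deriv_bound[OF z, of u]
    unfolding rho1_def Let_def u_def[symmetric] by argo
  then show ?thesis
    unfolding tau1_def tau0_def using gamma lam_pos
    by (intro divide_right_mono mult_left_mono) (auto simp: sqrt_kern_mult)
qed

lemma C_full_subset_C_up_tau1:
  fixes Phi :: "'x \<Rightarrow> 'h::{real_inner,complete_space}"
  assumes labels: "ys ` {1..n} \<subseteq> YY" and z: "z \<in> YY"
    and score_lip: "\<And>t. t \<in> YY \<Longrightarrow> gamma-lipschitz_on UNIV (s t)"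
  shows "C_full YY l s Phi lam alpha n xs ys \<subseteq> C_up YY l s Phi lam alpha n xs ys z (tau1 l Phi gamma lam n xs ys z)"
proof -
  have "pval_full l s Phi lam n xs ys y \<le> pval_up l s Phi lam n xs ys z (tau1 l Phi gamma lam n xs ys z) y"
    if "y \<in> YY" for y
    using labels that
    by (intro pval_full_le_pval_up score_shift_le_tau1[OF labels that z] score_lip) auto
  then show ?thesis unfolding C_full_def C_up_def by (auto intro: less_le_trans)
qed

lemma C_up_tau1_subset_tau0:
  assumes "z \<in> YY" "gamma \<ge> 0"
  shows "C_up YY l s Phi lam alpha n xs ys z (tau1 l Phi gamma lam n xs ys z)
       \<subseteq> C_up YY l s Phi lam alpha n xs ys z (tau0 Phi gamma rho lam n xs)"
  using assms by (intro C_up_mono tau1_le_tau0)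

lemma reg_risk_rational_near_min:
  assumes labels: "ys ` {1..n+1} \<subseteq> YY" and min: "minimizes (reg_risk l Phi lam n xs ys) w"
    and e: "e > 0"
  shows "\<exists>qs. reg_risk l Phi lam n xs ys (feature_comb Phi n xs (rat_coeffs qs))
    < reg_risk l Phi lam n xs ys w + e"
proof -
  define a where "a k = - deriv (l (ys k)) (w \<bullet> Phi (xs k)) / (2 * lam * real (n+1))" for k
  have w: "w = feature_comb Phi n xs a"
    unfolding feature_comb_def a_def by (rule reg_risk_representer[OF labels min])
  obtain eta where eta: "eta > 0"
    and near: "\<And>v. dist v w < eta \<Longrightarrow>
      dist (reg_risk l Phi lam n xs ys v) (reg_risk l Phi lam n xs ys w) < e"
    using reg_risk_continuous[OF labels, of Phi xs] e unfolding continuous_on_iff by blast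
  define B where "B = (\<Sum>k=1..n+1. norm (Phi (xs k))) + 1"
  have B: "B > 0" unfolding B_def by (simp add: sum_nonneg add_nonneg_pos del: sum.cl_ivl_Suc)
  obtain qs where qs: "\<forall>k\<in>{1..n+1}. \<bar>rat_coeffs qs k - a k\<bar> < eta / B"
    using rat_coeffs_approx[of "eta / B" n a] eta B by auto
  have "norm (feature_comb Phi n xs (rat_coeffs qs) - w)
      = norm (\<Sum>k=1..n+1. (rat_coeffs qs k - a k) *\<^sub>R Phi (xs k))"
    unfolding w feature_comb_def by (simp add: sum_subtractf scaleR_diff_left del: sum.cl_ivl_Suc)
  also have "\<dots> \<le> (\<Sum>k=1..n+1. eta / B * norm (Phi (xs k)))"
  proof (rule sum_norm_le)
    fix k assume "k \<in> {1..n+1}"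
    then have "\<bar>rat_coeffs qs k - a k\<bar> \<le> eta / B" using qs by (simp add: less_imp_le)
    then show "norm ((rat_coeffs qs k - a k) *\<^sub>R Phi (xs k)) \<le> eta / B * norm (Phi (xs k))"
      unfolding norm_scaleR real_norm_def by (rule mult_right_mono) simp
  qed
  also have "\<dots> = eta / B * (\<Sum>k=1..n+1. norm (Phi (xs k)))"
    by (rule sum_distrib_left[symmetric])
  also have "\<dots> < eta / B * B"
    using eta B unfolding B_def by (intro mult_strict_left_mono) auto
  finally have "dist (feature_comb Phi n xs (rat_coeffs qs)) w < eta"
    using B by (simp add: dist_norm)
  from near[OF this] show ?thesis
    by (intro exI[of _ qs]) (simp add: dist_real_def abs_less_iff)
qed

lemma near_minimizer_inner_close:
  assumes labels: "ys ` {1..n+1} \<subseteq> YY" and min: "minimizes (reg_risk l Phi lam n xs ys) w"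
    and near: "reg_risk l Phi lam n xs ys v \<le> reg_risk l Phi lam n xs ys w + r"
  shows "\<bar>v \<bullet> Phi x - w \<bullet> Phi x\<bar> \<le> sqrt (r / lam) * norm (Phi x)"
proof -
  have "lam * (norm (v - w))\<^sup>2 \<le> r"
    using reg_risk_quadratic_growth[OF labels min, of v] near by simp
  then have "norm (v - w) \<le> sqrt (r / lam)"
    using lam_pos by (simp add: real_le_rsqrt pos_le_divide_eq mult.commute)
  then have "norm (v - w) * norm (Phi x) \<le> sqrt (r / lam) * norm (Phi x)"
    by (rule mult_right_mono) simp
  then show ?thesis
    using Cauchy_Schwarz_ineq2[of "v - w" "Phi x"] by (simp add: inner_diff_left)
qed

text \<open>The fitted value of a minimizer is pinned down by countably many rational near-minimizers;
  this is what makes it a measurable function of the data.\<close>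

lemma minimizer_inner_less_iff:
  assumes labels: "ys ` {1..n+1} \<subseteq> YY" and min: "minimizes (reg_risk l Phi lam n xs ys) w"
  shows "w \<bullet> Phi x < c \<longleftrightarrow>
    (\<exists>r::rat. \<exists>qs. 0 < r
       \<and> feature_comb Phi n xs (rat_coeffs qs) \<bullet> Phi x + sqrt (real_of_rat r / lam) * norm (Phi x) < c
       \<and> (\<forall>qs'. reg_risk l Phi lam n xs ys (feature_comb Phi n xs (rat_coeffs qs))
                < reg_risk l Phi lam n xs ys (feature_comb Phi n xs (rat_coeffs qs')) + real_of_rat r))"
  (is "_ \<longleftrightarrow> (\<exists>r qs. 0 < r \<and> ?close r qs \<and> ?near r qs)")
proof
  let ?R = "reg_risk l Phi lam n xs ys" and ?v = "\<lambda>qs. feature_comb Phi n xs (rat_coeffs qs)"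
  let ?K = "norm (Phi x)"
  assume less: "w \<bullet> Phi x < c"
  define gap where "gap = c - w \<bullet> Phi x"
  have gap: "gap > 0" using less by (simp add: gap_def)
  obtain r :: rat where r: "0 < r" and slack: "sqrt (real_of_rat r / lam) * ?K < gap / 2"
    using ex_rat_sqrt_slack[OF lam_pos gap norm_ge_zero] by blast
  then have "0 < real_of_rat r" by simp
  from reg_risk_rational_near_min[OF labels min this]
  obtain qs where qs: "?R (?v qs) < ?R w + real_of_rat r" by blast
  have "?near r qs"
  proof
    fix qs'
    have "?R w \<le> ?R (?v qs')" using min by (simp add: minimizes_def)
    then show "?R (?v qs) < ?R (?v qs') + real_of_rat r" using qs by linarith
  qed
  moreover have "?close r qs"
    using near_minimizer_inner_close[OF labels min less_imp_le[OF qs], of x] slack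
    unfolding gap_def by argo
  ultimately show "\<exists>r qs. 0 < r \<and> ?close r qs \<and> ?near r qs"
    using r by blast
next
  let ?R = "reg_risk l Phi lam n xs ys" and ?v = "\<lambda>qs. feature_comb Phi n xs (rat_coeffs qs)"
  assume "\<exists>r qs. 0 < r \<and> ?close r qs \<and> ?near r qs"
  then obtain r qs where close: "?close r qs" and near: "?near r qs" by blast
  have "?R (?v qs) \<le> ?R w + real_of_rat r"
  proof (rule ccontr)
    assume "\<not> ?thesis"
    then have "0 < ?R (?v qs) - ?R w - real_of_rat r" by simp
    from reg_risk_rational_near_min[OF labels min this] obtain qs'
      where "?R (?v qs') < ?R w + (?R (?v qs) - ?R w - real_of_rat r)" by blast
    moreover from near have "?R (?v qs) < ?R (?v qs') + real_of_rat r" by blast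
    ultimately show False by linarith
  qed
  from near_minimizer_inner_close[OF labels min this, of x] close
  show "w \<bullet> Phi x < c" by argo
qed

lemma measurable_fitted_value:
  fixes Phi :: "'x::second_countable_topology \<Rightarrow> 'h::{real_inner,complete_space}"
  assumes kern_meas: "(\<lambda>(x, x'). kern Phi x x') \<in> borel_measurable (borel :: ('x \<times> 'x) measure)"
    and l_meas: "(\<lambda>(y, u). l y u) \<in> borel_measurable (restrict_space borel (YY \<times> UNIV))"
    and j: "j \<in> {1..n+1}"
  shows "(\<lambda>p. fitted_value l Phi lam n p j) \<in> borel_measurable (labelled_data YY n)"
proof -
  let ?D = "labelled_data YY n :: (nat \<Rightarrow> 'x \<times> real) measure"
  note kern_data = measurable_labelled_data_kern[OF kern_meas]
  define R where "R qs p =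
      (\<Sum>i=1..n+1. l (snd (p i)) (\<Sum>k=1..n+1. rat_coeffs qs k * kern Phi (fst (p k)) (fst (p i))))
        / real (n+1)
      + lam * (\<Sum>k=1..n+1. \<Sum>m=1..n+1. rat_coeffs qs k * rat_coeffs qs m * kern Phi (fst (p k)) (fst (p m)))"
    for qs p
  define E where "E qs r p =
      (\<Sum>k=1..n+1. rat_coeffs qs k * kern Phi (fst (p k)) (fst (p j)))
      + sqrt (real_of_rat r / lam) * sqrt (kern Phi (fst (p j)) (fst (p j)))"
    for qs r and p :: "nat \<Rightarrow> 'x \<times> real"
  have [measurable]: "R qs \<in> borel_measurable ?D" for qs
    unfolding R_def
    by (intro borel_measurable_add borel_measurable_divide borel_measurable_sum borel_measurable_times
        borel_measurable_const borel_measurable_restricted_comp[OF l_meas] kern_data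
        measurable_labelled_data_snd) (auto simp: space_labelled_data)
  have [measurable]: "E qs r \<in> borel_measurable ?D" for qs r
    unfolding E_def using j
    by (intro borel_measurable_add borel_measurable_sum borel_measurable_times borel_measurable_const
        measurable_compose[OF kern_data borel_measurable_sqrt] kern_data) auto
  have "{p \<in> space ?D. fitted_value l Phi lam n p j < c}
    = {p \<in> space ?D. \<exists>r::rat. \<exists>qs. 0 < r \<and> E qs r p < c \<and> (\<forall>qs'. R qs p < R qs' p + real_of_rat r)}"
    for c
  proof (rule Collect_cong, rule conj_cong[OF refl])
    fix p :: "nat \<Rightarrow> 'x \<times> real" assume "p \<in> space ?D"
    then have labels: "(\<lambda>i. snd (p i)) ` {1..n+1} \<subseteq> YY" by (auto simp: space_labelled_data)
    have "(\<lambda>i. snd (p i)) ` {1..n} \<subseteq> YY" "snd (p (n+1)) \<in> YY" using labels by auto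
    moreover have upd: "(\<lambda>i. snd (p i))(n+1 := snd (p (n+1))) = (\<lambda>i. snd (p i))" by auto
    ultimately have "minimizes (reg_risk l Phi lam n (\<lambda>i. fst (p i)) (\<lambda>i. snd (p i)))
        (fhat l Phi lam n (\<lambda>i. fst (p i)) (\<lambda>i. snd (p i)) (snd (p (n+1))))"
      using fhat_minimizes[of "\<lambda>i. snd (p i)" n "snd (p (n+1))" Phi "\<lambda>i. fst (p i)"]
      unfolding upd by blast
    from minimizer_inner_less_iff[OF labels this]
    show "fitted_value l Phi lam n p j < c
      \<longleftrightarrow> (\<exists>r::rat. \<exists>qs. 0 < r \<and> E qs r p < c \<and> (\<forall>qs'. R qs p < R qs' p + real_of_rat r))"
      by (simp add: fitted_value_def R_def E_def reg_risk_feature_comb feature_comb_inner kern_def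
          norm_eq_sqrt_inner)
  qed
  moreover have "{p \<in> space ?D. \<exists>r::rat. \<exists>qs. 0 < r \<and> E qs r p < c
      \<and> (\<forall>qs'. R qs p < R qs' p + real_of_rat r)} \<in> sets ?D" for c
    by measurable
  ultimately show ?thesis
    unfolding borel_measurable_iff_less by simp
qed

lemma measurable_fhat_inner_relabelled:
  fixes X :: "nat \<Rightarrow> 'w \<Rightarrow> 'x::second_countable_topology" and Phi :: "'x \<Rightarrow> 'h::{real_inner,complete_space}"
  assumes meas_X: "\<And>i. i \<in> {1..n+1} \<Longrightarrow> X i \<in> borel_measurable M"
    and meas_Y: "\<And>i. i \<in> {1..n+1} \<Longrightarrow> Y i \<in> borel_measurable M"
    and range_Y: "\<And>i \<omega>. i \<in> {1..n+1} \<Longrightarrow> \<omega> \<in> space M \<Longrightarrow> Y i \<omega> \<in> YY"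
    and kern_meas: "(\<lambda>(x, x'). kern Phi x x') \<in> borel_measurable (borel :: ('x \<times> 'x) measure)"
    and l_meas: "(\<lambda>(y, u). l y u) \<in> borel_measurable (restrict_space borel (YY \<times> UNIV))"
    and z: "z \<in> YY" and i: "i \<in> {1..n+1}"
  shows "(\<lambda>\<omega>. fhat l Phi lam n (\<lambda>k. X k \<omega>) (\<lambda>k. Y k \<omega>) z \<bullet> Phi (X i \<omega>)) \<in> borel_measurable M"
proof -
  let ?D = "\<lambda>\<omega>. \<lambda>k\<in>{1..n+1}. (X k \<omega>, if k = n+1 then z else Y k \<omega>)"
  have "?D \<in> measurable M (labelled_data YY n)"
  proof (rule measurable_into_labelled_data)
    fix k assume k: "k \<in> {1..n+1}"
    show "X k \<in> borel_measurable M" by (rule meas_X[OF k])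
    show "(\<lambda>\<omega>. if k = n+1 then z else Y k \<omega>) \<in> borel_measurable M"
      using meas_Y[OF k] by (cases "k = n+1") simp_all
    show "(if k = n+1 then z else Y k \<omega>) \<in> YY" if "\<omega> \<in> space M" for \<omega>
      using range_Y[OF k that] z by simp
  qed
  from measurable_compose[OF this measurable_fitted_value[OF kern_meas l_meas i]]
  have "(\<lambda>\<omega>. fitted_value l Phi lam n (?D \<omega>) i) \<in> borel_measurable M" .
  moreover have "fitted_value l Phi lam n (?D \<omega>) i = fhat l Phi lam n (\<lambda>k. X k \<omega>) (\<lambda>k. Y k \<omega>) z \<bullet> Phi (X i \<omega>)"
    for \<omega>
    by (rule fitted_value_relabel) (use i in auto)
  ultimately show ?thesis by simp
qed

lemma measurable_tau1:
  fixes X :: "nat \<Rightarrow> 'w \<Rightarrow> 'x::second_countable_topology" and Phi :: "'x \<Rightarrow> 'h::{real_inner,complete_space}"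
  assumes meas_X: "\<And>i. i \<in> {1..n+1} \<Longrightarrow> X i \<in> borel_measurable M"
    and meas_Y: "\<And>i. i \<in> {1..n+1} \<Longrightarrow> Y i \<in> borel_measurable M"
    and range_Y: "\<And>i \<omega>. i \<in> {1..n+1} \<Longrightarrow> \<omega> \<in> space M \<Longrightarrow> Y i \<omega> \<in> YY"
    and kern_meas: "(\<lambda>(x, x'). kern Phi x x') \<in> borel_measurable (borel :: ('x \<times> 'x) measure)"
    and l_meas: "(\<lambda>(y, u). l y u) \<in> borel_measurable (restrict_space borel (YY \<times> UNIV))"
    and z: "z \<in> YY" and i: "i \<in> {1..n+1}"
  shows "(\<lambda>\<omega>. tau1 l Phi gamma lam n (\<lambda>k. X k \<omega>) (\<lambda>k. Y k \<omega>) z i (Y (n+1) \<omega>)) \<in> borel_measurable M"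
proof -
  have last: "n+1 \<in> {1..n+1}" by simp
  let ?u = "\<lambda>\<omega>. fhat l Phi lam n (\<lambda>k. X k \<omega>) (\<lambda>k. Y k \<omega>) z \<bullet> Phi (X (n+1) \<omega>)"
  have u: "?u \<in> borel_measurable M"
    by (rule measurable_fhat_inner_relabelled[OF meas_X meas_Y range_Y kern_meas l_meas z last])
  have deriv_meas: "(\<lambda>(y, u). deriv (l y) u) \<in> borel_measurable (restrict_space borel (YY \<times> UNIV))"
    by (rule borel_measurable_restricted_deriv[OF l_meas loss_deriv])
  have [measurable]: "(\<lambda>\<omega>. deriv (l (Y (n+1) \<omega>)) (?u \<omega>)) \<in> borel_measurable M"
    by (rule borel_measurable_restricted_comp[OF deriv_meas meas_Y[OF last] u range_Y[OF last]])
  have [measurable]: "(\<lambda>\<omega>. deriv (l z) (?u \<omega>)) \<in> borel_measurable M"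
    by (rule borel_measurable_restricted_comp[OF deriv_meas borel_measurable_const u]) (rule z)
  have kern_diag: "(\<lambda>\<omega>. kern Phi (X k \<omega>) (X k \<omega>)) \<in> borel_measurable M" if "k \<in> {1..n+1}" for k
    using measurable_compose[OF borel_measurable_Pair[OF meas_X[OF that] meas_X[OF that]] kern_meas] by simp
  note [measurable] = kern_diag[OF i] kern_diag[OF last]
  show ?thesis
    unfolding tau1_def rho1_def Let_def by measurable
qed

lemma C_up_tau1_event_measurable:
  fixes X :: "nat \<Rightarrow> 'w \<Rightarrow> 'x::second_countable_topology" and Phi :: "'x \<Rightarrow> 'h::{real_inner,complete_space}"
  assumes meas_X: "\<And>i. i \<in> {1..n+1} \<Longrightarrow> X i \<in> borel_measurable M"
    and meas_Y: "\<And>i. i \<in> {1..n+1} \<Longrightarrow> Y i \<in> borel_measurable M"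
    and range_Y: "\<And>i \<omega>. i \<in> {1..n+1} \<Longrightarrow> \<omega> \<in> space M \<Longrightarrow> Y i \<omega> \<in> YY"
    and kern_meas: "(\<lambda>(x, x'). kern Phi x x') \<in> borel_measurable (borel :: ('x \<times> 'x) measure)"
    and l_meas: "(\<lambda>(y, u). l y u) \<in> borel_measurable (restrict_space borel (YY \<times> UNIV))"
    and s_meas: "(\<lambda>(y, u). s y u) \<in> borel_measurable (restrict_space borel (YY \<times> UNIV))"
    and z: "z \<in> YY"
  shows "{\<omega>\<in>space M. Y (n+1) \<omega> \<in> C_up YY l s Phi lam alpha n (\<lambda>i. X i \<omega>) (\<lambda>i. Y i \<omega>) z
            (tau1 l Phi gamma lam n (\<lambda>i. X i \<omega>) (\<lambda>i. Y i \<omega>) z)} \<in> sets M"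
proof -
  have last: "n+1 \<in> {1..n+1}" by simp
  let ?S = "\<lambda>\<omega> i. s (Y i \<omega>) (fhat l Phi lam n (\<lambda>k. X k \<omega>) (\<lambda>k. Y k \<omega>) z \<bullet> Phi (X i \<omega>))"
  let ?t = "\<lambda>\<omega> i. tau1 l Phi gamma lam n (\<lambda>k. X k \<omega>) (\<lambda>k. Y k \<omega>) z i (Y (n+1) \<omega>)"
  have score_meas: "(\<lambda>\<omega>. ?S \<omega> i) \<in> borel_measurable M" if "i \<in> {1..n+1}" for i
    using range_Y[OF that]
    by (intro borel_measurable_restricted_comp[OF s_meas meas_Y[OF that]
          measurable_fhat_inner_relabelled[OF meas_X meas_Y range_Y kern_meas l_meas z that]]) auto
  have "(\<lambda>\<omega>. pval_up l s Phi lam n (\<lambda>k. X k \<omega>) (\<lambda>k. Y k \<omega>) z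
      (tau1 l Phi gamma lam n (\<lambda>k. X k \<omega>) (\<lambda>k. Y k \<omega>) z) (Y (n+1) \<omega>)) \<in> borel_measurable M"
    unfolding pval_up_def Let_def card_filter_eq_sum[OF finite_atLeastAtMost]
  proof (intro borel_measurable_divide borel_measurable_add borel_measurable_const borel_measurable_sum)
    fix i assume "i \<in> {1..n}"
    then have i: "i \<in> {1..n+1}" by simp
    note [measurable] = score_meas[OF i] score_meas[OF last]
      measurable_tau1[OF meas_X meas_Y range_Y kern_meas l_meas z i]
      measurable_tau1[OF meas_X meas_Y range_Y kern_meas l_meas z last]
    show "(\<lambda>\<omega>. if ?S \<omega> (n+1) - ?t \<omega> (n+1) \<le> ?S \<omega> i + ?t \<omega> i then 1 else 0 :: real) \<in> borel_measurable M"
      by measurable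
  qed
  then have "{\<omega>\<in>space M. alpha < pval_up l s Phi lam n (\<lambda>k. X k \<omega>) (\<lambda>k. Y k \<omega>) z
      (tau1 l Phi gamma lam n (\<lambda>k. X k \<omega>) (\<lambda>k. Y k \<omega>) z) (Y (n+1) \<omega>)} \<in> sets M"
    unfolding borel_measurable_iff_greater by blast
  moreover have "{\<omega>\<in>space M. Y (n+1) \<omega> \<in> C_up YY l s Phi lam alpha n (\<lambda>i. X i \<omega>) (\<lambda>i. Y i \<omega>) z
        (tau1 l Phi gamma lam n (\<lambda>i. X i \<omega>) (\<lambda>i. Y i \<omega>) z)}
      = {\<omega>\<in>space M. alpha < pval_up l s Phi lam n (\<lambda>k. X k \<omega>) (\<lambda>k. Y k \<omega>) z
        (tau1 l Phi gamma lam n (\<lambda>k. X k \<omega>) (\<lambda>k. Y k \<omega>) z) (Y (n+1) \<omega>)}"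
    using range_Y[OF last] by (auto simp: C_up_def)
  ultimately show ?thesis by simp
qed

lemma exchangeable_conformal_scores:
  fixes X :: "nat \<Rightarrow> 'w \<Rightarrow> 'x::second_countable_topology" and Phi :: "'x \<Rightarrow> 'h::{real_inner,complete_space}"
  assumes meas_X: "\<And>i. i \<in> {1..n+1} \<Longrightarrow> X i \<in> borel_measurable M"
    and meas_Y: "\<And>i. i \<in> {1..n+1} \<Longrightarrow> Y i \<in> borel_measurable M"
    and range_Y: "\<And>i \<omega>. i \<in> {1..n+1} \<Longrightarrow> \<omega> \<in> space M \<Longrightarrow> Y i \<omega> \<in> YY"
    and exch: "exchangeable M n (\<lambda>i \<omega>. (X i \<omega>, Y i \<omega>))"
    and kern_meas: "(\<lambda>(x, x'). kern Phi x x') \<in> borel_measurable (borel :: ('x \<times> 'x) measure)"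
    and l_meas: "(\<lambda>(y, u). l y u) \<in> borel_measurable (restrict_space borel (YY \<times> UNIV))"
    and s_meas: "(\<lambda>(y, u). s y u) \<in> borel_measurable (restrict_space borel (YY \<times> UNIV))"
  shows "exchangeable_scores M n (\<lambda>i \<omega>. (X i \<omega>, Y i \<omega>)) {p. \<forall>i\<in>{1..n+1}. snd (p i) \<in> YY}
    (\<lambda>p i. s (snd (p i)) (fitted_value l Phi lam n p i))"
proof
  show "exchangeable M n (\<lambda>i \<omega>. (X i \<omega>, Y i \<omega>))" by (rule exch)
  show "(\<lambda>\<omega>. (X i \<omega>, Y i \<omega>)) \<in> borel_measurable M" if "i \<in> {1..n+1}" for i
    using meas_X[OF that] meas_Y[OF that] by (rule borel_measurable_Pair)
  show "(\<lambda>i\<in>{1..n+1}. (X (\<tau> i) \<omega>, Y (\<tau> i) \<omega>)) \<in> {p. \<forall>i\<in>{1..n+1}. snd (p i) \<in> YY}"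
    if "\<tau> permutes {1..n+1}" "\<omega> \<in> space M" for \<tau> \<omega>
    using range_Y[OF permutes_in_image[OF that(1), THEN iffD2] that(2)] by auto
  show "(\<lambda>p. s (snd (p i)) (fitted_value l Phi lam n p i)) \<in> borel_measurable
      (restrict_space (PiM {1..n+1} (\<lambda>_. borel)) {p. \<forall>i\<in>{1..n+1}. snd (p i) \<in> YY})"
    if "i \<in> {1..n+1}" for i
    unfolding labelled_data_def[symmetric] using that
    by (intro borel_measurable_restricted_comp[OF s_meas measurable_labelled_data_snd
          measurable_fitted_value[OF kern_meas l_meas]]) (auto simp: space_labelled_data)
  show "s (snd ((\<lambda>k\<in>{1..n+1}. p (\<tau> k)) i)) (fitted_value l Phi lam n (\<lambda>k\<in>{1..n+1}. p (\<tau> k)) i)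
      = s (snd (p (\<tau> i))) (fitted_value l Phi lam n p (\<tau> i))"
    if "\<tau> permutes {1..n+1}" "i \<in> {1..n+1}" for \<tau> p i
    using that fitted_value_permute[OF that, where p = p and l = l and Phi = Phi and lam = lam] by simp
qed

lemma C_up_tau1_miss_low_rank:
  fixes Phi :: "'x \<Rightarrow> 'h::{real_inner,complete_space}"
  assumes labels: "ys ` {1..n+1} \<subseteq> YY" and z: "z \<in> YY"
    and score_lip: "\<And>t. t \<in> YY \<Longrightarrow> gamma-lipschitz_on UNIV (s t)"
    and miss: "ys (n+1) \<notin> C_up YY l s Phi lam alpha n xs ys z (tau1 l Phi gamma lam n xs ys z)"
  shows "real (card {i\<in>{1..n+1}. s (ys (n+1)) (fhat l Phi lam n xs ys (ys (n+1)) \<bullet> Phi (xs (n+1)))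
      \<le> s (ys i) (fhat l Phi lam n xs ys (ys (n+1)) \<bullet> Phi (xs i))}) \<le> alpha * real (n+1)"
proof -
  have "ys ` {1..n} \<subseteq> YY" "ys (n+1) \<in> YY" using labels by auto
  with C_full_subset_C_up_tau1[where s = s and xs = xs and Phi = Phi and alpha = alpha,
      OF this(1) z score_lip] miss
  have "\<not> alpha < pval_full l s Phi lam n xs ys (ys (n+1))"
    by (auto simp: C_full_def)
  then show ?thesis
    using pval_full_le_iff_rank[where l = l and s = s and Phi = Phi and xs = xs and ys = ys
        and lam = lam and n = n and alpha = alpha] by simp
qed

lemma C_up_tau1_coverage:
  fixes X :: "nat \<Rightarrow> 'w \<Rightarrow> 'x::second_countable_topology" and Phi :: "'x \<Rightarrow> 'h::{real_inner,complete_space}"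
  assumes prob: "prob_space M"
    and meas_X: "\<And>i. i \<in> {1..n+1} \<Longrightarrow> X i \<in> borel_measurable M"
    and meas_Y: "\<And>i. i \<in> {1..n+1} \<Longrightarrow> Y i \<in> borel_measurable M"
    and range_Y: "\<And>i \<omega>. i \<in> {1..n+1} \<Longrightarrow> \<omega> \<in> space M \<Longrightarrow> Y i \<omega> \<in> YY"
    and exch: "exchangeable M n (\<lambda>i \<omega>. (X i \<omega>, Y i \<omega>))"
    and kern_meas: "(\<lambda>(x, x'). kern Phi x x') \<in> borel_measurable (borel :: ('x \<times> 'x) measure)"
    and l_meas: "(\<lambda>(y, u). l y u) \<in> borel_measurable (restrict_space borel (YY \<times> UNIV))"
    and s_meas: "(\<lambda>(y, u). s y u) \<in> borel_measurable (restrict_space borel (YY \<times> UNIV))"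
    and score_lip: "\<And>t. t \<in> YY \<Longrightarrow> gamma-lipschitz_on UNIV (s t)"
    and z: "z \<in> YY" and alpha: "0 \<le> alpha"
  shows "1 - alpha \<le> measure M {\<omega>\<in>space M. Y (n+1) \<omega> \<in> C_up YY l s Phi lam alpha n (\<lambda>i. X i \<omega>) (\<lambda>i. Y i \<omega>) z
            (tau1 l Phi gamma lam n (\<lambda>i. X i \<omega>) (\<lambda>i. Y i \<omega>) z)}"
    (is "_ \<le> measure M ?covered")
proof -
  interpret prob_space M by (rule prob)
  let ?D = "\<lambda>\<omega>. \<lambda>k\<in>{1..n+1}. (X k \<omega>, Y k \<omega>)"
  let ?T = "\<lambda>\<omega> i. s (Y i \<omega>) (fhat l Phi lam n (\<lambda>i. X i \<omega>) (\<lambda>i. Y i \<omega>) (Y (n+1) \<omega>) \<bullet> Phi (X i \<omega>))"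
  define score where "score p i = s (snd (p i)) (fitted_value l Phi lam n p i)"
    for p :: "nat \<Rightarrow> 'x \<times> real" and i
  define miss where "miss = {\<omega>\<in>space M.
      real (card {i\<in>{1..n+1}. score (?D \<omega>) (n+1) \<le> score (?D \<omega>) i}) \<le> alpha * real (n+1)}"
  interpret exchangeable_scores M n "\<lambda>i \<omega>. (X i \<omega>, Y i \<omega>)" "{p. \<forall>i\<in>{1..n+1}. snd (p i) \<in> YY}" score
    unfolding score_def using meas_X meas_Y range_Y exch kern_meas l_meas s_meas
    by (rule exchangeable_conformal_scores)
  have miss_le: "measure M miss \<le> alpha"
    unfolding miss_def using rank_tail[OF prob alpha] by simp
  have miss_events: "miss \<in> events"
    unfolding miss_def by (rule rank_event_measurable) simp
  have uncovered: "space M - ?covered \<subseteq> miss"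
  proof
    fix \<omega> assume \<omega>: "\<omega> \<in> space M - ?covered"
    have "(\<lambda>i. Y i \<omega>) ` {1..n+1} \<subseteq> YY" using \<omega> range_Y by auto
    from C_up_tau1_miss_low_rank[where s = s and xs = "\<lambda>i. X i \<omega>" and Phi = Phi and alpha = alpha,
        OF this z score_lip] \<omega>
    have "real (card {i\<in>{1..n+1}. ?T \<omega> (n+1) \<le> ?T \<omega> i}) \<le> alpha * real (n+1)"
      by simp
    moreover have "score (?D \<omega>) i = ?T \<omega> i" if "i \<in> {1..n+1}" for i
    proof -
      have "fitted_value l Phi lam n (?D \<omega>) i
          = fhat l Phi lam n (\<lambda>i. X i \<omega>) (\<lambda>i. Y i \<omega>) (Y (n+1) \<omega>) \<bullet> Phi (X i \<omega>)"
        by (rule fitted_value_relabel) (use that in auto)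
      then show ?thesis using that by (simp add: score_def)
    qed
    then have "{i\<in>{1..n+1}. score (?D \<omega>) (n+1) \<le> score (?D \<omega>) i} = {i\<in>{1..n+1}. ?T \<omega> (n+1) \<le> ?T \<omega> i}"
      by auto
    ultimately show "\<omega> \<in> miss"
      using \<omega> by (simp add: miss_def)
  qed
  have "?covered \<in> events"
    using meas_X meas_Y range_Y kern_meas l_meas s_meas z by (rule C_up_tau1_event_measurable)
  then show ?thesis
    using finite_measure_mono[OF uncovered miss_events] miss_le prob_compl by simp
qed

end

theorem corollary14:
  fixes M :: "'w measure"
    and X :: "nat \<Rightarrow> 'w \<Rightarrow> real ^ 'd"
    and Y :: "nat \<Rightarrow> 'w \<Rightarrow> real"
    and XX :: "(real ^ 'd) set" and YY :: "real set"
    and Phi :: "real ^ 'd \<Rightarrow> 'h :: {real_inner, complete_space}"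
    and l s :: "real \<Rightarrow> real \<Rightarrow> real"
    and lam rho gamma alpha z :: real and n :: nat
  assumes prob: "prob_space M"
    and meas_X: "\<And>i. i \<in> {1..n+1} \<Longrightarrow> X i \<in> borel_measurable M"
    and meas_Y: "\<And>i. i \<in> {1..n+1} \<Longrightarrow> Y i \<in> borel_measurable M"
    and range_X: "\<And>i \<omega>. i \<in> {1..n+1} \<Longrightarrow> \<omega> \<in> space M \<Longrightarrow> X i \<omega> \<in> XX"
    and range_Y: "\<And>i \<omega>. i \<in> {1..n+1} \<Longrightarrow> \<omega> \<in> space M \<Longrightarrow> Y i \<omega> \<in> YY"
    and exch: "exchangeable M n (\<lambda>i \<omega>. (X i \<omega>, Y i \<omega>))"
    and kern_meas: "(\<lambda>(x, x'). kern Phi x x') \<in> borel_measurable (borel :: ((real ^ 'd) \<times> (real ^ 'd)) measure)"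
    and l_meas: "(\<lambda>(y, u). l y u) \<in> borel_measurable (restrict_space borel (YY \<times> UNIV))"
    and s_meas: "(\<lambda>(y, u). s y u) \<in> borel_measurable (restrict_space borel (YY \<times> UNIV))"
    and lam_pos: "lam > 0"
    and rho_pos: "rho > 0"
    and l_convex: "\<And>y. y \<in> YY \<Longrightarrow> convex_on UNIV (l y)"
    and l_C2: "\<And>y. y \<in> YY \<Longrightarrow> \<exists>l' l''. (\<forall>u. (l y has_real_derivative l' u) (at u))
                      \<and> (\<forall>u. (l' has_real_derivative l'' u) (at u)) \<and> continuous_on UNIV l''"
    and l_lip: "\<And>y. y \<in> YY \<Longrightarrow> rho-lipschitz_on UNIV (l y)"
    and s_lip: "\<And>y. y \<in> YY \<Longrightarrow> gamma-lipschitz_on UNIV (s y)"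
    and z_in: "z \<in> YY"
    and alpha: "0 < alpha" "alpha < 1"
  shows "prob_space.prob M
           {\<omega> \<in> space M.
              Y (n+1) \<omega> \<in> C_up YY l s Phi lam alpha n (\<lambda>i. X i \<omega>) (\<lambda>i. Y i \<omega>) z
                 (tau1 l Phi gamma lam n (\<lambda>i. X i \<omega>) (\<lambda>i. Y i \<omega>) z)}
         \<ge> 1 - alpha
       \<and> (AE \<omega> in M.
            leb_outer (C_up YY l s Phi lam alpha n (\<lambda>i. X i \<omega>) (\<lambda>i. Y i \<omega>) z
                         (tau1 l Phi gamma lam n (\<lambda>i. X i \<omega>) (\<lambda>i. Y i \<omega>) z)
                       - C_full YY l s Phi lam alpha n (\<lambda>i. X i \<omega>) (\<lambda>i. Y i \<omega>))
          \<le> leb_outer (C_up YY l s Phi lam alpha n (\<lambda>i. X i \<omega>) (\<lambda>i. Y i \<omega>) z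
                         (tau0 Phi gamma rho lam n (\<lambda>i. X i \<omega>))
                       - C_full YY l s Phi lam alpha n (\<lambda>i. X i \<omega>) (\<lambda>i. Y i \<omega>)))"
proof -
  have loss_deriv: "(l y has_real_derivative deriv (l y) u) (at u)" if y: "y \<in> YY" for y u
  proof -
    obtain l' where "\<forall>u. (l y has_real_derivative l' u) (at u)" using l_C2[OF y] by blast
    then show ?thesis by (metis DERIV_imp_deriv)
  qed
  interpret regularized_erm l YY rho lam
    using lam_pos l_convex l_lip loss_deriv by unfold_locales
  have gamma: "gamma \<ge> 0" using lipschitz_on_nonneg[OF s_lip[OF z_in]] .
  show ?thesis
    by (intro conjI AE_I2 leb_outer_mono Diff_mono C_up_tau1_subset_tau0[OF z_in gamma] subset_refl
        C_up_tau1_coverage[OF prob meas_X meas_Y range_Y exch kern_meas l_meas s_meas s_lip z_in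
          less_imp_le[OF alpha(1)]])
qed

end
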